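(* For every $d,k,N\in\mathbb{N}$, the barycenter map $\mathsf{bary}:\mathcal{G}_{d,k}^N\to\mathcal{G}_{d,k}$ is (i) surjective, (ii) invariant under permutation of the sample $(\mathbf{x}_1,\dots,\mathbf{x}_N)$, and (iii) bijective when $N-1$ of the $N$ sample elements are fixed, i.e. for all $\mathbf{x}_1,\dots,\mathbf{x}_{N-1},\mathbf{y}\in\mathcal{G}_{d,k}$ there is a unique $\mathbf{x}_N\in\mathcal{G}_{d,k}$ with $\mathsf{bary}(\mathbf{x}_1,\dots,\mathbf{x}_N)=\mathbf{y}$.
   Context: $T_{d,k}=\bigoplus_{\ell=0}^k(\mathbb{R}^d)^{\otimes\ell}$ is the truncated tensor algebra with product the bilinear extension of the tensor product of levels, set to $0$ when the total level exceeds $k$. $\mathfrak{g}_{d,k}$ is the smallest Lie subalgebra (commutator bracket) of $T_{d,k}$ containing $e_1,\dots,e_d\in\mathbb{R}^d$; $\exp(\mathbf{z})=\sum_{\ell=0}^k\mathbf{z}^{\otimes\ell}/\ell!$; $\mathcal{G}_{d,k}=\exp(\mathfrak{g}_{d,k})$, a group under the product of $T_{d,k}$, with $\log=\exp^{-1}$, $\log(\mathbf{s})=\sum_{\ell\ge1}\frac{(-1)^{\ell+1}}{\ell}(\mathbf{s}-1)^{\otimes\ell}$. For $\mathbf{x}\in\mathcal{G}_{d,k}^N$, $\mathsf{bary}(\mathbf{x})$ is the unique $\mathbf{m}\in\mathcal{G}_{d,k}$ with $\sum_{i=1}^N\log(\mathbf{m}^{-1}\mathbf{x}_i)=0$. 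*)

theory Defs
  imports Complex_Main "HOL-Combinatorics.Permutations"
begin

text \<open>An element is represented by its coefficient
  function on words (lists of letters); letter i stands for the basis vector e_{i+1}
  of R^d, so letters range over 0..d-1. Elements of T_{d,k} vanish on words of
  length > k and on words containing a letter >= d.\<close>

type_synonym tensor = "nat list \<Rightarrow> real"

definition tcarrier :: "nat \<Rightarrow> nat \<Rightarrow> tensor set" where
  "tcarrier d k = {a. \<forall>w. (k < length w \<or> (\<exists>i\<in>set w. d \<le> i)) \<longrightarrow> a w = 0}"

definition tunit :: tensor where
  "tunit = (\<lambda>w. if w = [] then 1 else 0)"

text \<open>Basis vector e_{i+1} in T_{d,k} (zero if k = 0, since level 1 is truncated).\<close>
definition tgen :: "nat \<Rightarrow> nat \<Rightarrow> tensor" where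
  "tgen k i = (\<lambda>w. if w = [i] \<and> 1 \<le> k then 1 else 0)"

definition tadd :: "tensor \<Rightarrow> tensor \<Rightarrow> tensor" where
  "tadd a b = (\<lambda>w. a w + b w)"

definition tsub :: "tensor \<Rightarrow> tensor \<Rightarrow> tensor" where
  "tsub a b = (\<lambda>w. a w - b w)"

definition tscale :: "real \<Rightarrow> tensor \<Rightarrow> tensor" where
  "tscale c a = (\<lambda>w. c * a w)"

definition tmul :: "nat \<Rightarrow> tensor \<Rightarrow> tensor \<Rightarrow> tensor" where
  "tmul k a b = (\<lambda>w. if length w \<le> k
      then (\<Sum>i\<le>length w. a (take i w) * b (drop i w)) else 0)"

primrec tpow :: "nat \<Rightarrow> tensor \<Rightarrow> nat \<Rightarrow> tensor" where
  "tpow k a 0 = tunit"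
| "tpow k a (Suc n) = tmul k a (tpow k a n)"

definition tbracket :: "nat \<Rightarrow> tensor \<Rightarrow> tensor \<Rightarrow> tensor" where
  "tbracket k a b = tsub (tmul k a b) (tmul k b a)"

inductive_set lie_alg :: "nat \<Rightarrow> nat \<Rightarrow> tensor set" for d k where
  zero: "(\<lambda>w. 0) \<in> lie_alg d k"
| gen: "i < d \<Longrightarrow> tgen k i \<in> lie_alg d k"
| add: "a \<in> lie_alg d k \<Longrightarrow> b \<in> lie_alg d k \<Longrightarrow> tadd a b \<in> lie_alg d k"
| scale: "a \<in> lie_alg d k \<Longrightarrow> tscale c a \<in> lie_alg d k"
| bracket: "a \<in> lie_alg d k \<Longrightarrow> b \<in> lie_alg d k \<Longrightarrow> tbracket k a b \<in> lie_alg d k"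

definition texp :: "nat \<Rightarrow> tensor \<Rightarrow> tensor" where
  "texp k z = (\<lambda>w. \<Sum>l\<le>k. tpow k z l w / fact l)"

definition tlog :: "nat \<Rightarrow> tensor \<Rightarrow> tensor" where
  "tlog k s = (\<lambda>w. \<Sum>l\<in>{1..k}. ((-1) ^ (l + 1) / real l) * tpow k (tsub s tunit) l w)"

text \<open>Inverse in the group (m = 1 - u with u nilpotent: m^{-1} = sum of u^l).\<close>
definition tinv :: "nat \<Rightarrow> tensor \<Rightarrow> tensor" where
  "tinv k m = (\<lambda>w. \<Sum>l\<le>k. tpow k (tsub tunit m) l w)"

definition grp :: "nat \<Rightarrow> nat \<Rightarrow> tensor set" where
  "grp d k = texp k ` lie_alg d k"

text \<open>Barycenter of a sample x_0..x_{N-1} (given as a function on indices < N).\<close>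
definition bary :: "nat \<Rightarrow> nat \<Rightarrow> nat \<Rightarrow> (nat \<Rightarrow> tensor) \<Rightarrow> tensor" where
  "bary d k N x = (THE m. m \<in> grp d k \<and>
      (\<lambda>w. \<Sum>i<N. tlog k (tmul k (tinv k m) (x i)) w) = (\<lambda>w. 0))"

end

theory Submission
  imports Defs "HOL-Library.Poly_Mapping" "HOL-Library.Product_Plus"
    "HOL-Computational_Algebra.Formal_Power_Series"
begin

text \<open>
  The truncated tensor algebra is the free associative algebra on the letters modulo words
  of length greater than k. We compute in the free algebra and truncate at the end; all
  identities of formal power series (exp and log inverse to each other, exp of a sum of
  commuting elements) then hold up to degree k.

  The Lie algebra is identified, via the Friedrichs criterion, with the primitive elements of
  the shuffle coproduct, and its image under exp with the group-like elements; the latter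
  are closed under products because the coproduct is multiplicative. The hard inclusion
  (primitive implies Lie) is the Dynkin--Specht--Wever lemma: the map
  \<open>u \<otimes> v \<mapsto> S(u) D(v)\<close>, with S the antipode and D the degree operator, sends the coproduct of
  a word to its left-normed bracket and a primitive p of degree n to n p.

  The barycentre equation \<open>\<Sum>\<^sub>i log (m\<inverse> x\<^sub>i) = 0\<close> is solved degree by degree: replacing m by
  m exp c, with c vanishing below degree n, changes the left-hand side by \<open>-N c\<close> modulo
  degree n + 1. This gives existence by successive correction and uniqueness by looking at
  the lowest degree in which two solutions differ.
\<close>

section \<open>Polynomials over a graded monoid\<close>

text \<open>Lists form a monoid under concatenation, so \<open>nat list \<Rightarrow>\<^sub>0 real\<close> with the convolution
  product of Poly_Mapping is the free associative algebra on the letters.\<close>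

instantiation list :: (type) monoid_add
begin
definition zero_list_def: "0 = []"
definition plus_list_def: "xs + ys = xs @ ys"
instance by standard (auto simp: zero_list_def plus_list_def)
end

class graded = monoid_add +
  fixes deg :: "'a \<Rightarrow> nat"
  assumes deg_plus: "deg (a + b) = deg a + deg b"

instantiation list :: (type) graded
begin
definition deg_list_def: "deg (xs :: 'a list) = length xs"
instance by standard (auto simp: deg_list_def plus_list_def)
end

instantiation prod :: (graded, graded) graded
begin
definition deg_prod_def: "deg (p :: 'a \<times> 'b) = deg (fst p) + deg (snd p)"
instance by standard (auto simp: deg_prod_def deg_plus)
end

lemma list_plus: "(u::'a list) + v = u @ v"
  by (simp add: plus_list_def)

lemma list_zero: "(0::'a list) = []"
  by (simp add: zero_list_def)

lemma deg_list: "deg (u :: 'a list) = length u"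
  by (simp add: deg_list_def)

lemma deg_pair: "deg ((u, v) :: 'a list \<times> 'b list) = length u + length v"
  by (simp add: deg_prod_def deg_list_def)

type_synonym 'a gpoly = "'a \<Rightarrow>\<^sub>0 real"

abbreviation coeff :: "('a \<Rightarrow>\<^sub>0 'b::zero) \<Rightarrow> 'a \<Rightarrow> 'b" where
  "coeff \<equiv> Poly_Mapping.lookup"

definition scalar :: "real \<Rightarrow> ('a::monoid_add) gpoly" where
  "scalar c = Poly_Mapping.single 0 c"

lemma lookup_scalar_mult: "coeff (scalar c * x) w = c * coeff x w"
  unfolding scalar_def
  by (simp flip: mult_map_scale_conv_mult, transfer, simp add: when_def)

lemma lookup_mult_scalar: "coeff (x * scalar c) w = coeff x w * c"
proof -
  have "Sum_any (\<lambda>q. coeff (Poly_Mapping.single 0 c) q when w = l + q) = (c when w = l)" for l :: 'a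
  proof -
    have "Sum_any (\<lambda>q. coeff (Poly_Mapping.single 0 c) q when w = l + q)
        = Sum_any (\<lambda>q. (c when w = l + q) when q = 0)"
      by (rule Sum_any.cong) (auto simp: lookup_single when_def)
    then show ?thesis by simp
  qed
  then show ?thesis
    unfolding scalar_def lookup_mult by (simp add: mult_when)
qed

lemma scalar_commute: "scalar c * x = x * scalar c"
  by (rule poly_mapping_eqI) (simp add: lookup_scalar_mult lookup_mult_scalar)

lemma scalar_mult: "scalar a * scalar b = scalar (a * b)"
  by (simp add: scalar_def mult_single)

lemma scalar_add: "scalar (a + b) = scalar a + scalar b"
  by (simp add: scalar_def single_add)

lemma scalar_diff: "scalar (a - b) = scalar a - scalar b"
  by (simp add: scalar_def single_diff)

lemma scalar_uminus: "scalar (- a) = - scalar a"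
  by (simp add: scalar_def single_uminus)

lemma scalar_0 [simp]: "scalar 0 = 0"
  by (simp add: scalar_def)

lemma scalar_1 [simp]: "scalar 1 = 1"
  by (simp add: scalar_def)

lemma scalar_of_nat: "scalar (real m) = of_nat m"
  by (induction m) (simp_all add: scalar_add)

lemma scalar_sum: "scalar (sum f A) = (\<Sum>i\<in>A. scalar (f i))"
  by (induction A rule: infinite_finite_induct) (auto simp: scalar_add)

lemma scalar_mult_assoc: "scalar a * (scalar b * x) = scalar (a * b) * x"
  by (simp add: scalar_mult flip: mult.assoc)

lemma mult_scalar_left_commute: "x * (scalar c * y) = scalar c * (x * y)"
  by (metis scalar_commute mult.assoc)

definition vanishes_below :: "nat \<Rightarrow> ('a::graded) gpoly \<Rightarrow> bool" where
  "vanishes_below n f \<longleftrightarrow> (\<forall>x. deg x < n \<longrightarrow> coeff f x = 0)"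

lemma vanishes_below_0 [simp]: "vanishes_below 0 f"
  by (simp add: vanishes_below_def)

lemma vanishes_below_zero [simp]: "vanishes_below n 0"
  by (simp add: vanishes_below_def)

lemma vanishes_below_mono: "vanishes_below n f \<Longrightarrow> m \<le> n \<Longrightarrow> vanishes_below m f"
  by (auto simp: vanishes_below_def)

lemma vanishes_below_add: "vanishes_below n f \<Longrightarrow> vanishes_below n g \<Longrightarrow> vanishes_below n (f + g)"
  by (simp add: vanishes_below_def lookup_add)

lemma vanishes_below_diff: "vanishes_below n f \<Longrightarrow> vanishes_below n g \<Longrightarrow> vanishes_below n (f - g)"
  by (simp add: vanishes_below_def lookup_minus)

lemma vanishes_below_uminus: "vanishes_below n f \<Longrightarrow> vanishes_below n (- f)"
  by (simp add: vanishes_below_def lookup_uminus)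

lemma vanishes_below_scalar_mult: "vanishes_below n f \<Longrightarrow> vanishes_below n (scalar c * f)"
  by (simp add: vanishes_below_def lookup_scalar_mult)

lemma vanishes_below_sum: "(\<And>i. i \<in> A \<Longrightarrow> vanishes_below n (f i)) \<Longrightarrow> vanishes_below n (sum f A)"
  by (induction A rule: infinite_finite_induct) (auto intro: vanishes_below_add)

lemma vanishes_below_single: "n \<le> deg k \<Longrightarrow> vanishes_below n (Poly_Mapping.single k c)"
  by (auto simp: vanishes_below_def lookup_single when_def)

lemma vanishes_below_mult:
  fixes f g :: "'a::graded gpoly"
  assumes f: "vanishes_below m f" and g: "vanishes_below n g"
  shows "vanishes_below (m + n) (f * g)"
  unfolding vanishes_below_def
proof (intro allI impI)
  fix x :: 'a assume x: "deg x < m + n"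
  show "coeff (f * g) x = 0"
  proof (rule ccontr)
    assume "coeff (f * g) x \<noteq> 0"
    then obtain a b where "x = a + b" "a \<in> Poly_Mapping.keys f" "b \<in> Poly_Mapping.keys g"
      using keys_mult by (blast dest: in_keys_iff[THEN iffD2])
    moreover from this f g have "m \<le> deg a" "n \<le> deg b"
      unfolding vanishes_below_def in_keys_iff using not_less by blast+
    ultimately show False using x by (simp add: deg_plus)
  qed
qed

lemma vanishes_below_mult_left: "vanishes_below n f \<Longrightarrow> vanishes_below n (f * g)"
  using vanishes_below_mult[of n f 0 g] by simp

lemma vanishes_below_mult_right: "vanishes_below n g \<Longrightarrow> vanishes_below n (f * g)"
  using vanishes_below_mult[of 0 f n g] by simp

lemma vanishes_below_power: "vanishes_below m z \<Longrightarrow> vanishes_below (m * n) (z ^ n)"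
proof (induction n)
  case (Suc n)
  then have "vanishes_below (m + m * n) (z * z ^ n)" by (intro vanishes_below_mult) auto
  then show ?case by simp
qed simp

lemma vanishes_below_1_power: "vanishes_below 1 z \<Longrightarrow> vanishes_below n (z ^ n)"
  using vanishes_below_power[of 1 z n] by simp

definition agree_below :: "nat \<Rightarrow> ('a::graded) gpoly \<Rightarrow> 'a gpoly \<Rightarrow> bool" where
  "agree_below n a b \<longleftrightarrow> vanishes_below n (a - b)"

lemma agree_below_refl [simp]: "agree_below n a a"
  by (simp add: agree_below_def)

lemma agree_below_sym: "agree_below n a b \<Longrightarrow> agree_below n b a"
  unfolding agree_below_def by (drule vanishes_below_uminus) simp

lemma agree_below_trans [trans]: "agree_below n a b \<Longrightarrow> agree_below n b c \<Longrightarrow> agree_below n a c"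
  unfolding agree_below_def by (drule (1) vanishes_below_add) simp

lemma agree_below_mono: "agree_below n a b \<Longrightarrow> m \<le> n \<Longrightarrow> agree_below m a b"
  unfolding agree_below_def using vanishes_below_mono by blast

lemma agree_below_add: "agree_below n a b \<Longrightarrow> agree_below n c d \<Longrightarrow> agree_below n (a + c) (b + d)"
  unfolding agree_below_def by (drule (1) vanishes_below_add) (simp add: algebra_simps)

lemma agree_below_diff: "agree_below n a b \<Longrightarrow> agree_below n c d \<Longrightarrow> agree_below n (a - c) (b - d)"
  unfolding agree_below_def by (drule (1) vanishes_below_diff) (simp add: algebra_simps)

lemma agree_below_mult:
  fixes a b c d :: "'a::graded gpoly"
  assumes ab: "agree_below n a b" and cd: "agree_below n c d"
  shows "agree_below n (a * c) (b * d)"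
proof -
  have "a * c - b * d = (a - b) * c + b * (c - d)" by (simp add: algebra_simps)
  moreover have "vanishes_below n ((a - b) * c)" "vanishes_below n (b * (c - d))"
    using ab cd by (simp_all add: agree_below_def vanishes_below_mult_left vanishes_below_mult_right)
  ultimately show ?thesis by (simp add: agree_below_def vanishes_below_add)
qed

lemma agree_below_scalar_mult: "agree_below n a b \<Longrightarrow> agree_below n (scalar c * a) (scalar c * b)"
  by (rule agree_below_mult) auto

lemma agree_below_power: "agree_below n a b \<Longrightarrow> agree_below n (a ^ m) (b ^ m)"
  by (induction m) (auto intro: agree_below_mult)

lemma agree_below_sum:
  "(\<And>i. i \<in> A \<Longrightarrow> agree_below n (f i) (g i)) \<Longrightarrow> agree_below n (sum f A) (sum g A)"
  by (induction A rule: infinite_finite_induct) (auto intro: agree_below_add)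

lemma agree_below_vanishes_below_iff:
  assumes "agree_below n a b"
  shows "vanishes_below n a \<longleftrightarrow> vanishes_below n b"
proof -
  have "a = (a - b) + b" "b = a - (a - b)" by simp_all
  then show ?thesis
    using assms unfolding agree_below_def by (metis vanishes_below_add vanishes_below_diff)
qed

lemma mult_sums_agree_below_Cauchy_product:
  fixes A B :: "nat \<Rightarrow> ('a::graded) gpoly"
  assumes "\<And>i. vanishes_below i (A i)" "\<And>j. vanishes_below j (B j)"
  shows "agree_below (Suc K) ((\<Sum>i\<le>K. A i) * (\<Sum>j\<le>K. B j)) (\<Sum>n\<le>K. \<Sum>i\<le>n. A i * B (n - i))"
proof -
  let ?S = "{..K} \<times> {..K}" and ?T = "{(i,j). i + j \<le> K}"
  have "(\<Sum>i\<le>K. A i) * (\<Sum>j\<le>K. B j) = (\<Sum>(i,j)\<in>?S. A i * B j)"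
    by (simp add: sum_product sum.cartesian_product)
  also have "\<dots> = (\<Sum>(i,j)\<in>?S - ?T. A i * B j) + (\<Sum>(i,j)\<in>?T. A i * B j)"
    by (rule sum.subset_diff) auto
  also have "(\<Sum>(i,j)\<in>?T. A i * B j) = (\<Sum>n\<le>K. \<Sum>i\<le>n. A i * B (n - i))"
    by (rule sum.triangle_reindex_eq)
  finally have eq: "(\<Sum>i\<le>K. A i) * (\<Sum>j\<le>K. B j) - (\<Sum>n\<le>K. \<Sum>i\<le>n. A i * B (n - i))
      = (\<Sum>(i,j)\<in>?S - ?T. A i * B j)" by simp
  have "vanishes_below (Suc K) (\<Sum>(i,j)\<in>?S - ?T. A i * B j)"
  proof (rule vanishes_below_sum)
    fix p assume "p \<in> ?S - ?T"
    then obtain i j where p: "p = (i, j)" "Suc K \<le> i + j" by auto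
    have "vanishes_below (i + j) (A i * B j)" by (rule vanishes_below_mult) (use assms in auto)
    then show "vanishes_below (Suc K) (case p of (i, j) \<Rightarrow> A i * B j)"
      using p vanishes_below_mono by auto
  qed
  then show ?thesis unfolding agree_below_def eq .
qed

section \<open>Power series evaluated up to a degree\<close>

definition eval_upto :: "nat \<Rightarrow> real fps \<Rightarrow> ('a::monoid_add) gpoly \<Rightarrow> 'a gpoly" where
  "eval_upto K f z = (\<Sum>i\<le>K. scalar (fps_nth f i) * z ^ i)"

abbreviation "log1p_fps \<equiv> (fps_ln 1 :: real fps)"
abbreviation "expm1_fps \<equiv> (fps_exp 1 - 1 :: real fps)"
abbreviation "exp_fps \<equiv> (fps_exp 1 :: real fps)"

lemma eval_upto_diff: "eval_upto K (f - g) z = eval_upto K f z - eval_upto K g z"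
  by (simp add: eval_upto_def scalar_diff left_diff_distrib sum_subtractf)

lemma eval_upto_1: "eval_upto K 1 z = 1"
proof -
  have "eval_upto K 1 z = (\<Sum>i\<in>{0}. scalar (fps_nth 1 i) * z ^ i)"
    unfolding eval_upto_def by (rule sum.mono_neutral_right) auto
  then show ?thesis by simp
qed

lemma eval_upto_exp_fps: "eval_upto K exp_fps z = 1 + eval_upto K expm1_fps z"
  by (simp add: eval_upto_diff eval_upto_1)

lemma eval_upto_at_0: "eval_upto K f 0 = scalar (fps_nth f 0)"
proof -
  have "eval_upto K f 0 = (\<Sum>i\<in>{0}. scalar (fps_nth f i) * 0 ^ i)"
    unfolding eval_upto_def by (rule sum.mono_neutral_right) (auto simp: power_0_left)
  then show ?thesis by simp
qed

lemma eval_upto_X: "vanishes_below 1 z \<Longrightarrow> agree_below (Suc K) (eval_upto K fps_X z) z"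
proof (cases K)
  case 0
  assume "vanishes_below 1 z"
  then show ?thesis using 0 by (simp add: eval_upto_def agree_below_def vanishes_below_uminus)
next
  case (Suc K')
  then have "eval_upto K fps_X z = (\<Sum>i\<in>{1}. scalar (fps_nth fps_X i) * z ^ i)"
    unfolding eval_upto_def by (intro sum.mono_neutral_right) auto
  then show ?thesis by simp
qed

lemma vanishes_below_eval_upto:
  assumes "vanishes_below 1 z" "fps_nth f 0 = 0"
  shows "vanishes_below 1 (eval_upto K f z)"
  unfolding eval_upto_def
proof (rule vanishes_below_sum)
  fix i
  show "vanishes_below 1 (scalar (fps_nth f i) * z ^ i)"
  proof (cases i)
    case (Suc n)
    then have "vanishes_below 1 (z ^ i)"
      using vanishes_below_1_power[OF assms(1), of i] vanishes_below_mono by fastforce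
    then show ?thesis by (rule vanishes_below_scalar_mult)
  qed (simp add: assms(2))
qed

lemma eval_upto_agree_below:
  "agree_below n a b \<Longrightarrow> agree_below n (eval_upto K f a) (eval_upto K f b)"
  unfolding eval_upto_def by (intro agree_below_sum agree_below_scalar_mult agree_below_power)

lemma scalar_mult_scalar_mult: "scalar a * x * (scalar b * y) = scalar (a * b) * (x * y)"
proof -
  have "scalar a * x * (scalar b * y) = scalar a * (scalar b * (x * y))"
    by (simp only: mult.assoc mult_scalar_left_commute[of x])
  then show ?thesis by (simp only: scalar_mult_assoc)
qed

lemma eval_upto_mult:
  assumes z: "vanishes_below 1 z"
  shows "agree_below (Suc K) (eval_upto K f z * eval_upto K g z) (eval_upto K (f * g) z)"
proof -
  have "agree_below (Suc K) (eval_upto K f z * eval_upto K g z)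
      (\<Sum>n\<le>K. \<Sum>i\<le>n. scalar (fps_nth f i) * z ^ i * (scalar (fps_nth g (n - i)) * z ^ (n - i)))"
    unfolding eval_upto_def
    by (rule mult_sums_agree_below_Cauchy_product)
      (use z in \<open>auto intro!: vanishes_below_scalar_mult vanishes_below_1_power\<close>)
  also have "\<dots> = eval_upto K (f * g) z"
    unfolding eval_upto_def fps_mult_nth scalar_mult_scalar_mult
    by (auto simp: scalar_sum sum_distrib_right atLeast0AtMost simp flip: power_add intro!: sum.cong)
  finally show ?thesis .
qed

lemma eval_upto_power:
  assumes z: "vanishes_below 1 z"
  shows "agree_below (Suc K) ((eval_upto K f z) ^ l) (eval_upto K (f ^ l) z)"
proof (induction l)
  case 0
  then show ?case by (simp add: eval_upto_1)
next
  case (Suc l)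
  have "agree_below (Suc K) (eval_upto K f z * eval_upto K f z ^ l) (eval_upto K f z * eval_upto K (f ^ l) z)"
    by (rule agree_below_mult) (use Suc in auto)
  also have "agree_below (Suc K) \<dots> (eval_upto K (f * f ^ l) z)"
    by (rule eval_upto_mult[OF z])
  finally show ?case by simp
qed

lemma eval_upto_compose:
  assumes z: "vanishes_below 1 z" and g0: "fps_nth g 0 = 0"
  shows "agree_below (Suc K) (eval_upto K f (eval_upto K g z)) (eval_upto K (f oo g) z)"
proof -
  have "agree_below (Suc K) (eval_upto K f (eval_upto K g z))
      (\<Sum>l\<le>K. scalar (fps_nth f l) * eval_upto K (g ^ l) z)"
    unfolding eval_upto_def[of K f]
    by (intro agree_below_sum agree_below_scalar_mult eval_upto_power z)
  also have "\<dots> = (\<Sum>l\<le>K. \<Sum>n\<le>K. scalar (fps_nth f l * fps_nth (g ^ l) n) * z ^ n)"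
    by (simp add: eval_upto_def sum_distrib_left scalar_mult flip: mult.assoc)
  also have "\<dots> = (\<Sum>n\<le>K. \<Sum>l\<le>K. scalar (fps_nth f l * fps_nth (g ^ l) n) * z ^ n)"
    by (rule sum.swap)
  also have "\<dots> = (\<Sum>n\<le>K. scalar (fps_nth (f oo g) n) * z ^ n)"
  proof (rule sum.cong)
    fix n assume n: "n \<in> {..K}"
    \<comment> \<open>the l-th power of g starts in degree l, so only l \<le> n contributes\<close>
    have "(\<Sum>l\<le>K. fps_nth f l * fps_nth (g ^ l) n) = (\<Sum>l\<in>{0..n}. fps_nth f l * fps_nth (g ^ l) n)"
      by (rule sum.mono_neutral_right) (use n startsby_zero_power_prefix[OF g0] in auto)
    then show "(\<Sum>l\<le>K. scalar (fps_nth f l * fps_nth (g ^ l) n) * z ^ n) = scalar (fps_nth (f oo g) n) * z ^ n"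
      by (simp add: fps_compose_nth flip: sum_distrib_right scalar_sum)
  qed simp
  also have "\<dots> = eval_upto K (f oo g) z" by (simp add: eval_upto_def)
  finally show ?thesis .
qed

lemma eval_upto_log1p_expm1:
  assumes z: "vanishes_below 1 z"
  shows "agree_below (Suc K) (eval_upto K log1p_fps (eval_upto K expm1_fps z)) z"
proof -
  have "agree_below (Suc K) (eval_upto K log1p_fps (eval_upto K expm1_fps z)) (eval_upto K (log1p_fps oo expm1_fps) z)"
    by (rule eval_upto_compose[OF z]) (simp add: fps_ln_nth)
  also have "log1p_fps oo expm1_fps = fps_X"
    using fps_inv_fps_exp_compose(1)[of "1::real"] fps_ln_fps_exp_inv[of "1::real"] by simp
  also have "agree_below (Suc K) (eval_upto K fps_X z) z"
    by (rule eval_upto_X[OF z])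
  finally show ?thesis .
qed

lemma eval_upto_expm1_log1p:
  assumes z: "vanishes_below 1 z"
  shows "agree_below (Suc K) (eval_upto K expm1_fps (eval_upto K log1p_fps z)) z"
proof -
  have "agree_below (Suc K) (eval_upto K expm1_fps (eval_upto K log1p_fps z)) (eval_upto K (expm1_fps oo log1p_fps) z)"
    by (rule eval_upto_compose[OF z]) (simp add: fps_ln_nth)
  also have "expm1_fps oo log1p_fps = fps_X"
    using fps_inv_fps_exp_compose(2)[of "1::real"] fps_ln_fps_exp_inv[of "1::real"] by simp
  also have "agree_below (Suc K) (eval_upto K fps_X z) z"
    by (rule eval_upto_X[OF z])
  finally show ?thesis .
qed

lemma binomial_commuting:
  fixes a b :: "'a::ring_1"
  assumes ab: "a * b = b * a"
  shows "(a + b) ^ n = (\<Sum>k\<le>n. of_nat (n choose k) * a ^ k * b ^ (n - k))"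
proof (induction n)
  case 0
  then show ?case by simp
next
  case (Suc n)
  have a_mult: "a * (of_nat c * a ^ k * b ^ j) = of_nat c * a ^ (k + 1) * b ^ j" for c k j
    by (simp add: mult.assoc mult_of_nat_commute)
  have b_mult: "b * (of_nat c * a ^ k * b ^ j) = of_nat c * a ^ k * b ^ (j + 1)" for c k j
  proof -
    have "b * (of_nat c * a ^ k * b ^ j) = of_nat c * ((b * a ^ k) * b ^ j)"
      by (metis mult.assoc mult_of_nat_commute)
    also have "\<dots> = of_nat c * (a ^ k * (b * b ^ j))"
      using power_commuting_commutes[OF ab, of k] by (metis mult.assoc)
    finally show ?thesis by (simp add: mult.assoc)
  qed
  have "(a + b) ^ (n + 1) = (a + b) * (\<Sum>k\<le>n. of_nat (n choose k) * a ^ k * b ^ (n - k))"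
    using Suc.IH by simp
  also have "\<dots> = (\<Sum>k\<le>n. of_nat (n choose k) * a ^ (k + 1) * b ^ (n - k)) +
      (\<Sum>k\<le>n. of_nat (n choose k) * a ^ k * b ^ (n - k + 1))"
    unfolding distrib_right by (simp add: sum_distrib_left a_mult b_mult)
  also have "\<dots> = (\<Sum>k\<le>n. of_nat (n choose k) * a ^ k * b ^ (n + 1 - k)) +
      (\<Sum>k=1..n+1. of_nat (n choose (k - 1)) * a ^ k * b ^ (n + 1 - k))"
    by (simp add: atMost_atLeast0 sum.shift_bounds_cl_Suc_ivl Suc_diff_le del: sum.cl_ivl_Suc)
  also have "\<dots> = b ^ (n + 1) + (\<Sum>k=1..n. of_nat (n choose k) * a ^ k * b ^ (n + 1 - k)) +
      (a ^ (n + 1) + (\<Sum>k=1..n. of_nat (n choose (k - 1)) * a ^ k * b ^ (n + 1 - k)))"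
    using sum.nat_ivl_Suc'[of 1 n "\<lambda>k. of_nat (n choose (k - 1)) * a ^ k * b ^ (n + 1 - k)"]
    by (simp add: sum.atLeast_Suc_atMost atMost_atLeast0)
  also have "\<dots> = a ^ (n + 1) + b ^ (n + 1) +
      (\<Sum>k=1..n. of_nat (n + 1 choose k) * a ^ k * b ^ (n + 1 - k))"
    by (auto simp: algebra_simps choose_reduce_nat simp flip: sum.distrib intro!: sum.cong)
  also have "\<dots> = (\<Sum>k\<le>n + 1. of_nat (n + 1 choose k) * a ^ k * b ^ (n + 1 - k))"
    by (simp add: atMost_atLeast0 sum.atLeast_Suc_atMost algebra_simps)
  finally show ?case by simp
qed

lemma exp_fps_nth_mult: "i \<le> n \<Longrightarrow> fps_nth exp_fps i * fps_nth exp_fps (n - i) = real (n choose i) / fact n"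
  by (simp add: binomial_fact divide_simps)

lemma eval_upto_exp_add:
  fixes a b :: "'a::graded gpoly"
  assumes a: "vanishes_below 1 a" and b: "vanishes_below 1 b" and ab: "a * b = b * a"
  shows "agree_below (Suc K) (eval_upto K exp_fps a * eval_upto K exp_fps b) (eval_upto K exp_fps (a + b))"
proof -
  have "agree_below (Suc K) (eval_upto K exp_fps a * eval_upto K exp_fps b)
     (\<Sum>n\<le>K. \<Sum>i\<le>n. scalar (fps_nth exp_fps i) * a ^ i * (scalar (fps_nth exp_fps (n - i)) * b ^ (n - i)))"
    unfolding eval_upto_def
    by (rule mult_sums_agree_below_Cauchy_product)
      (use a b in \<open>auto intro!: vanishes_below_scalar_mult vanishes_below_1_power\<close>)
  also have "\<dots> = (\<Sum>n\<le>K. \<Sum>i\<le>n. scalar (1 / fact n) * (of_nat (n choose i) * a ^ i * b ^ (n - i)))"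
  proof (intro sum.cong refl)
    fix n i :: nat assume "i \<in> {..n}"
    then have "i \<le> n" by simp
    have "scalar (real (n choose i) / fact n) = scalar (1 / fact n) * (of_nat (n choose i) :: 'a gpoly)"
      by (simp add: scalar_mult flip: scalar_of_nat)
    then show "scalar (fps_nth exp_fps i) * a ^ i * (scalar (fps_nth exp_fps (n - i)) * b ^ (n - i))
        = scalar (1 / fact n) * (of_nat (n choose i) * a ^ i * b ^ (n - i))"
      unfolding scalar_mult_scalar_mult exp_fps_nth_mult[OF \<open>i \<le> n\<close>]
      by (simp add: mult.assoc)
  qed
  also have "\<dots> = (\<Sum>n\<le>K. scalar (1 / fact n) * (\<Sum>i\<le>n. of_nat (n choose i) * a ^ i * b ^ (n - i)))"
    by (simp only: sum_distrib_left)
  also have "\<dots> = eval_upto K exp_fps (a + b)"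
    by (simp add: eval_upto_def binomial_commuting[OF ab])
  finally show ?thesis .
qed

lemma eval_upto_exp_log1p:
  assumes "vanishes_below 1 (g - 1)"
  shows "agree_below (Suc K) (eval_upto K exp_fps (eval_upto K log1p_fps (g - 1))) g"
proof -
  have "eval_upto K exp_fps (eval_upto K log1p_fps (g - 1)) = 1 + eval_upto K expm1_fps (eval_upto K log1p_fps (g - 1))"
    by (rule eval_upto_exp_fps)
  also have "agree_below (Suc K) \<dots> (1 + (g - 1))"
    by (intro agree_below_add agree_below_refl eval_upto_expm1_log1p assms)
  finally show ?thesis by simp
qed

lemma vanishes_below_eval_upto_exp_minus_1:
  "vanishes_below 1 z \<Longrightarrow> vanishes_below 1 (eval_upto K exp_fps z - 1)"
  using vanishes_below_eval_upto[of z expm1_fps K] by (simp add: eval_upto_exp_fps)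

lemma eval_upto_exp_agree_below_cancel:
  assumes "vanishes_below 1 a" "vanishes_below 1 b"
    and "agree_below (Suc K) (eval_upto K exp_fps a) (eval_upto K exp_fps b)"
  shows "agree_below (Suc K) a b"
proof -
  have "agree_below (Suc K) (eval_upto K expm1_fps a) (eval_upto K expm1_fps b)"
    using agree_below_diff[OF assms(3) agree_below_refl[of _ 1]] by (simp add: eval_upto_exp_fps)
  then have "agree_below (Suc K) (eval_upto K log1p_fps (eval_upto K expm1_fps a))
      (eval_upto K log1p_fps (eval_upto K expm1_fps b))"
    by (rule eval_upto_agree_below)
  then show ?thesis
    using eval_upto_log1p_expm1[OF assms(1)] eval_upto_log1p_expm1[OF assms(2)]
    by (meson agree_below_sym agree_below_trans)
qed

section \<open>Linear extension of maps on monomials\<close>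

definition lin_ext :: "('a \<Rightarrow> ('b::monoid_add) gpoly) \<Rightarrow> 'a gpoly \<Rightarrow> 'b gpoly" where
  "lin_ext B x = (\<Sum>w\<in>Poly_Mapping.keys x. scalar (coeff x w) * B w)"

lemma lin_ext_superset:
  assumes "finite S" "Poly_Mapping.keys x \<subseteq> S"
  shows "lin_ext B x = (\<Sum>w\<in>S. scalar (coeff x w) * B w)"
  unfolding lin_ext_def
  by (rule sum.mono_neutral_left) (use assms in \<open>auto simp: in_keys_iff\<close>)

lemma lin_ext_0 [simp]: "lin_ext B 0 = 0"
  by (simp add: lin_ext_def)

lemma lin_ext_single: "lin_ext B (Poly_Mapping.single w c) = scalar c * B w"
  by (simp add: lin_ext_def lookup_single)

lemma lin_ext_add: "lin_ext B (x + y) = lin_ext B x + lin_ext B y"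
proof -
  let ?S = "Poly_Mapping.keys x \<union> Poly_Mapping.keys y"
  have "lin_ext B (x + y) = (\<Sum>w\<in>?S. scalar (coeff (x + y) w) * B w)"
    by (rule lin_ext_superset) (auto dest: subsetD[OF keys_add])
  also have "\<dots> = (\<Sum>w\<in>?S. scalar (coeff x w) * B w) + (\<Sum>w\<in>?S. scalar (coeff y w) * B w)"
    by (simp add: lookup_add scalar_add distrib_right sum.distrib)
  also have "\<dots> = lin_ext B x + lin_ext B y"
    by (simp add: lin_ext_superset[symmetric])
  finally show ?thesis .
qed

lemma lin_ext_scalar_mult: "lin_ext B (scalar c * x) = scalar c * lin_ext B x"
proof -
  have "lin_ext B (scalar c * x) = (\<Sum>w\<in>Poly_Mapping.keys x. scalar (coeff (scalar c * x) w) * B w)"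
    by (rule lin_ext_superset) (auto simp: in_keys_iff lookup_scalar_mult)
  also have "\<dots> = scalar c * lin_ext B x"
    by (simp add: lin_ext_def lookup_scalar_mult sum_distrib_left scalar_mult_assoc)
  finally show ?thesis .
qed

lemma lin_ext_uminus: "lin_ext B (- x) = - lin_ext B x"
  by (simp add: lin_ext_def scalar_uminus sum_negf)

lemma lin_ext_diff: "lin_ext B (x - y) = lin_ext B x - lin_ext B y"
  using lin_ext_add[of B x "- y"] by (simp add: lin_ext_uminus)

lemma lin_ext_sum: "lin_ext B (sum f A) = (\<Sum>i\<in>A. lin_ext B (f i))"
  by (induction A rule: infinite_finite_induct) (auto simp: lin_ext_add)

lemma gpoly_sum_single:
  "(x :: ('a::monoid_add) gpoly) = (\<Sum>w\<in>Poly_Mapping.keys x. scalar (coeff x w) * Poly_Mapping.single w 1)"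
proof (rule poly_mapping_eqI)
  fix v
  have "coeff (\<Sum>w\<in>Poly_Mapping.keys x. scalar (coeff x w) * Poly_Mapping.single w 1) v
      = (\<Sum>w\<in>Poly_Mapping.keys x. coeff x w * (if w = v then 1 else 0))"
    by (simp add: lookup_sum lookup_scalar_mult lookup_single when_def)
  also have "\<dots> = coeff x v"
    by (auto simp: in_keys_iff if_distrib cong: if_cong)
  finally show "coeff x v = coeff (\<Sum>w\<in>Poly_Mapping.keys x. scalar (coeff x w) * Poly_Mapping.single w 1) v" ..
qed

lemma lin_ext_single_1: "lin_ext (\<lambda>w. Poly_Mapping.single w 1) x = x"
  unfolding lin_ext_def by (rule gpoly_sum_single[symmetric])

lemma lin_ext_lin_ext: "lin_ext B (lin_ext A x) = lin_ext (\<lambda>w. lin_ext B (A w)) x"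
  by (simp add: lin_ext_def[of A] lin_ext_sum lin_ext_scalar_mult) (simp add: lin_ext_def)

lemma lin_ext_cong: "(\<And>w. w \<in> Poly_Mapping.keys x \<Longrightarrow> A w = B w) \<Longrightarrow> lin_ext A x = lin_ext B x"
  by (simp add: lin_ext_def)

lemma lin_ext_add_fun: "lin_ext (\<lambda>w. A w + B w) x = lin_ext A x + lin_ext B x"
  by (simp add: lin_ext_def distrib_left sum.distrib)

lemma lin_ext_zero_fun: "lin_ext (\<lambda>w. 0) x = 0"
  by (simp add: lin_ext_def)

lemma lin_ext_uminus_fun: "lin_ext (\<lambda>w. - A w) x = - lin_ext A x"
  by (simp add: lin_ext_def sum_negf)

lemma lin_ext_mult_left: "lin_ext (\<lambda>w. M * B w) x = M * lin_ext B x"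
  by (simp add: lin_ext_def sum_distrib_left mult_scalar_left_commute)

lemma lin_ext_mult_right: "lin_ext (\<lambda>w. B w * M) x = lin_ext B x * M"
  by (simp add: lin_ext_def sum_distrib_right mult.assoc)

lemma lin_ext_mult_eq_lin_ext_single_mult:
  "lin_ext B (x * y) = lin_ext (\<lambda>w. lin_ext B (Poly_Mapping.single w 1 * y)) x"
proof -
  have "x * y = (\<Sum>w\<in>Poly_Mapping.keys x. scalar (coeff x w) * (Poly_Mapping.single w 1 * y))"
    by (subst gpoly_sum_single[of x]) (simp add: sum_distrib_right mult.assoc)
  then show ?thesis
    by (simp add: lin_ext_sum lin_ext_scalar_mult lin_ext_def[of _ x])
qed

lemma lin_ext_mult:
  assumes mult_hom: "\<And>u v. B (u + v) = B u * B v"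
  shows "lin_ext B (x * y) = lin_ext B x * lin_ext B y"
proof -
  have "lin_ext B (x * y) = lin_ext (\<lambda>u. lin_ext B (Poly_Mapping.single u 1 * y)) x"
    by (rule lin_ext_mult_eq_lin_ext_single_mult)
  also have "\<dots> = lin_ext (\<lambda>u. B u * lin_ext B y) x"
  proof (rule lin_ext_cong)
    fix u
    have "Poly_Mapping.single u 1 * y
        = (\<Sum>v\<in>Poly_Mapping.keys y. scalar (coeff y v) * Poly_Mapping.single (u + v) 1)"
      by (subst gpoly_sum_single[of y]) (simp add: sum_distrib_left mult_scalar_left_commute mult_single)
    then show "lin_ext B (Poly_Mapping.single u 1 * y) = B u * lin_ext B y"
      by (simp add: lin_ext_sum lin_ext_scalar_mult lin_ext_single mult_hom lin_ext_def[of _ y]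
          sum_distrib_left mult_scalar_left_commute)
  qed
  also have "\<dots> = lin_ext B x * lin_ext B y"
    by (rule lin_ext_mult_right)
  finally show ?thesis .
qed

lemma lin_ext_1: "B 0 = 1 \<Longrightarrow> lin_ext B 1 = 1"
  using lin_ext_single[of B 0 1] by simp

lemma lin_ext_eval_upto:
  assumes "\<And>u v. B (u + v) = B u * B v" "B 0 = 1"
  shows "lin_ext B (eval_upto K f x) = eval_upto K f (lin_ext B x)"
proof -
  have "lin_ext B (x ^ n) = lin_ext B x ^ n" for n
    by (induction n) (simp_all add: lin_ext_1 lin_ext_mult assms)
  then show ?thesis
    by (simp add: eval_upto_def lin_ext_sum lin_ext_scalar_mult)
qed

lemma lin_ext_commute:
  assumes "\<And>u v. A u * B v = B v * A u"
  shows "lin_ext A x * lin_ext B y = lin_ext B y * lin_ext A x"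
  unfolding lin_ext_def sum_product
  by (subst sum.swap) (simp add: scalar_mult_scalar_mult assms mult.commute)

definition graded_map :: "('a::graded \<Rightarrow> 'b::graded gpoly) \<Rightarrow> bool" where
  "graded_map B \<longleftrightarrow> (\<forall>w. vanishes_below (deg w) (B w))"

lemma lin_ext_vanishes_below:
  assumes "graded_map B" "vanishes_below n x"
  shows "vanishes_below n (lin_ext B x)"
  unfolding lin_ext_def
proof (rule vanishes_below_sum)
  fix w assume "w \<in> Poly_Mapping.keys x"
  then have "n \<le> deg w"
    using assms(2) by (auto simp: vanishes_below_def in_keys_iff not_less[symmetric])
  then show "vanishes_below n (scalar (coeff x w) * B w)"
    using assms(1) by (auto simp: graded_map_def intro: vanishes_below_scalar_mult vanishes_below_mono)
qed

lemma lin_ext_agree_below: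
  assumes "graded_map B" "agree_below n x y"
  shows "agree_below n (lin_ext B x) (lin_ext B y)"
  using assms lin_ext_vanishes_below[of B n "x - y"] by (simp add: agree_below_def lin_ext_diff)

section \<open>The shuffle coproduct\<close>

text \<open>\<open>ncpoly2\<close> is the tensor square of \<open>ncpoly\<close>: the monomial \<open>(u, v)\<close> stands for \<open>u \<otimes> v\<close>.\<close>

type_synonym ncpoly = "nat list gpoly"
type_synonym ncpoly2 = "(nat list \<times> nat list) gpoly"

definition letter :: "nat \<Rightarrow> ncpoly" where
  "letter a = Poly_Mapping.single [a] 1"

definition left_word :: "nat list \<Rightarrow> ncpoly2" where
  "left_word u = Poly_Mapping.single (u, []) 1"

definition right_word :: "nat list \<Rightarrow> ncpoly2" where
  "right_word v = Poly_Mapping.single ([], v) 1"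

definition coprod_word :: "nat list \<Rightarrow> ncpoly2" where
  "coprod_word w = foldr (\<lambda>a acc. (left_word [a] + right_word [a]) * acc) w 1"

abbreviation embed_left :: "ncpoly \<Rightarrow> ncpoly2" where
  "embed_left \<equiv> lin_ext left_word"

abbreviation embed_right :: "ncpoly \<Rightarrow> ncpoly2" where
  "embed_right \<equiv> lin_ext right_word"

abbreviation coprod :: "ncpoly \<Rightarrow> ncpoly2" where
  "coprod \<equiv> lin_ext coprod_word"

lemma single_Nil_Nil: "(Poly_Mapping.single ([], []) 1 :: ncpoly2) = 1"
  using single_one[where 'a="nat list \<times> nat list"] by (simp add: zero_prod_def list_zero)

lemma single_Nil: "(Poly_Mapping.single [] 1 :: ncpoly) = 1"
  using single_one[where 'a="nat list"] by (simp add: list_zero)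

lemma left_word_plus: "left_word (u + v) = left_word u * left_word v"
  by (simp add: left_word_def mult_single list_plus)

lemma right_word_plus: "right_word (u + v) = right_word u * right_word v"
  by (simp add: right_word_def mult_single list_plus)

lemma coprod_word_Cons: "coprod_word (a # w) = (left_word [a] + right_word [a]) * coprod_word w"
  by (simp add: coprod_word_def)

lemma coprod_word_plus: "coprod_word (u + v) = coprod_word u * coprod_word v"
  by (induction u) (simp_all add: list_plus coprod_word_Cons mult.assoc, simp add: coprod_word_def)

lemma coprod_word_snoc: "coprod_word (w @ [a]) = coprod_word w * (left_word [a] + right_word [a])"
  using coprod_word_plus[of w "[a]"] by (simp add: list_plus coprod_word_Cons coprod_word_def)

lemma embed_left_mult: "embed_left (x * y) = embed_left x * embed_left y"
  by (rule lin_ext_mult) (rule left_word_plus)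

lemma embed_right_mult: "embed_right (x * y) = embed_right x * embed_right y"
  by (rule lin_ext_mult) (rule right_word_plus)

lemma coprod_mult: "coprod (x * y) = coprod x * coprod y"
  by (rule lin_ext_mult) (rule coprod_word_plus)

lemma embed_left_eval_upto: "embed_left (eval_upto K f x) = eval_upto K f (embed_left x)"
  by (rule lin_ext_eval_upto[OF left_word_plus]) (simp add: left_word_def list_zero single_Nil_Nil)

lemma embed_right_eval_upto: "embed_right (eval_upto K f x) = eval_upto K f (embed_right x)"
  by (rule lin_ext_eval_upto[OF right_word_plus]) (simp add: right_word_def list_zero single_Nil_Nil)

lemma coprod_eval_upto: "coprod (eval_upto K f x) = eval_upto K f (coprod x)"
  by (rule lin_ext_eval_upto[OF coprod_word_plus]) (simp add: coprod_word_def list_zero)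

lemma embed_left_right_commute: "embed_left x * embed_right y = embed_right y * embed_left x"
  by (rule lin_ext_commute) (simp add: left_word_def right_word_def mult_single list_plus)

lemma graded_map_left_word: "graded_map left_word"
  by (auto simp: graded_map_def left_word_def deg_pair deg_list intro!: vanishes_below_single)

lemma graded_map_right_word: "graded_map right_word"
  by (auto simp: graded_map_def right_word_def deg_pair deg_list intro!: vanishes_below_single)

lemma graded_map_coprod_word: "graded_map coprod_word"
  unfolding graded_map_def
proof
  fix w :: "nat list"
  show "vanishes_below (deg w) (coprod_word w)"
  proof (induction w)
    case Nil
    then show ?case by (simp add: deg_list)
  next
    case (Cons a w)
    have "vanishes_below 1 (left_word [a] + right_word [a])"
      by (auto intro!: vanishes_below_add vanishes_below_single simp: left_word_def right_word_def deg_pair)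
    from vanishes_below_mult[OF this Cons.IH] show ?case
      by (simp add: coprod_word_Cons deg_list)
  qed
qed

lemmas embed_left_agree_below = lin_ext_agree_below[OF graded_map_left_word]
lemmas embed_right_agree_below = lin_ext_agree_below[OF graded_map_right_word]
lemmas coprod_agree_below = lin_ext_agree_below[OF graded_map_coprod_word]
lemmas embed_left_vanishes_below = lin_ext_vanishes_below[OF graded_map_left_word]
lemmas embed_right_vanishes_below = lin_ext_vanishes_below[OF graded_map_right_word]
lemmas coprod_vanishes_below = lin_ext_vanishes_below[OF graded_map_coprod_word]

definition primitive :: "nat \<Rightarrow> ncpoly \<Rightarrow> bool" where
  "primitive K p \<longleftrightarrow>
    vanishes_below 1 p \<and> agree_below (Suc K) (coprod p) (embed_left p + embed_right p)"

definition group_like :: "nat \<Rightarrow> ncpoly \<Rightarrow> bool" where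
  "group_like K g \<longleftrightarrow>
    vanishes_below 1 (g - 1) \<and> agree_below (Suc K) (coprod g) (embed_left g * embed_right g)"

lemma primitive_letter: "primitive K (letter a)"
proof -
  have "coprod (letter a) = left_word [a] + right_word [a]"
    by (simp add: letter_def lin_ext_single coprod_word_Cons) (simp add: coprod_word_def)
  moreover have "embed_left (letter a) = left_word [a]" "embed_right (letter a) = right_word [a]"
    by (simp_all add: letter_def lin_ext_single)
  ultimately show ?thesis
    by (simp add: primitive_def letter_def vanishes_below_single deg_list)
qed

lemma primitive_add:
  assumes "primitive K p" "primitive K q"
  shows "primitive K (p + q)"
proof -
  have "agree_below (Suc K) (coprod p + coprod q)
      ((embed_left p + embed_right p) + (embed_left q + embed_right q))"
    using assms by (intro agree_below_add) (auto simp: primitive_def)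
  then show ?thesis
    using assms by (auto simp: primitive_def lin_ext_add algebra_simps intro: vanishes_below_add)
qed

lemma primitive_scalar_mult:
  assumes "primitive K p"
  shows "primitive K (scalar c * p)"
proof -
  have "agree_below (Suc K) (scalar c * coprod p) (scalar c * (embed_left p + embed_right p))"
    using assms by (intro agree_below_scalar_mult) (auto simp: primitive_def)
  then show ?thesis
    using assms
    by (auto simp: primitive_def lin_ext_scalar_mult distrib_left intro: vanishes_below_scalar_mult)
qed

lemma primitive_agree_below:
  assumes pq: "agree_below (Suc K) p q" and q: "primitive K q"
  shows "primitive K p"
proof -
  have "vanishes_below 1 p"
    using agree_below_vanishes_below_iff[OF agree_below_mono[OF pq]] q by (auto simp: primitive_def)
  moreover have "agree_below (Suc K) (coprod p) (embed_left p + embed_right p)"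
  proof -
    have "agree_below (Suc K) (coprod p) (coprod q)"
      by (rule coprod_agree_below[OF pq])
    also have "agree_below (Suc K) (coprod q) (embed_left q + embed_right q)"
      using q by (simp add: primitive_def)
    also have "agree_below (Suc K) (embed_left q + embed_right q) (embed_left p + embed_right p)"
      by (intro agree_below_add embed_left_agree_below embed_right_agree_below agree_below_sym[OF pq])
    finally show ?thesis .
  qed
  ultimately show ?thesis by (simp add: primitive_def)
qed

lemma primitive_commutator:
  assumes p: "primitive K p" and q: "primitive K q"
  shows "primitive K (p * q - q * p)"
proof -
  have "vanishes_below 1 (p * q - q * p)"
    using p q by (auto simp: primitive_def intro!: vanishes_below_diff vanishes_below_mult_left)
  moreover have "agree_below (Suc K) (coprod (p * q - q * p))
      (embed_left (p * q - q * p) + embed_right (p * q - q * p))"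
  proof -
    have "coprod (p * q - q * p) = coprod p * coprod q - coprod q * coprod p"
      by (simp add: lin_ext_diff coprod_mult)
    also have "agree_below (Suc K) \<dots>
        ((embed_left p + embed_right p) * (embed_left q + embed_right q)
          - (embed_left q + embed_right q) * (embed_left p + embed_right p))"
      using p q by (intro agree_below_diff agree_below_mult) (auto simp: primitive_def)
    also have "\<dots> = embed_left (p * q - q * p) + embed_right (p * q - q * p)"
      using embed_left_right_commute[of p q] embed_left_right_commute[of q p]
      by (simp add: lin_ext_diff embed_left_mult embed_right_mult algebra_simps)
    finally show ?thesis .
  qed
  ultimately show ?thesis by (simp add: primitive_def)
qed

lemma eval_upto_exp_embed_left_add_embed_right:
  assumes "vanishes_below 1 p"
  shows "agree_below (Suc K) (eval_upto K exp_fps (embed_left p + embed_right p))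
    (embed_left (eval_upto K exp_fps p) * embed_right (eval_upto K exp_fps p))"
proof -
  have "agree_below (Suc K) (eval_upto K exp_fps (embed_left p) * eval_upto K exp_fps (embed_right p))
      (eval_upto K exp_fps (embed_left p + embed_right p))"
    by (rule eval_upto_exp_add)
      (use assms in \<open>auto intro: embed_left_vanishes_below embed_right_vanishes_below embed_left_right_commute\<close>)
  then show ?thesis
    by (simp add: embed_left_eval_upto embed_right_eval_upto agree_below_sym)
qed

lemma group_like_exp:
  assumes p: "primitive K p"
  shows "group_like K (eval_upto K exp_fps p)"
proof -
  have p1: "vanishes_below 1 p" using p by (simp add: primitive_def)
  have "coprod (eval_upto K exp_fps p) = eval_upto K exp_fps (coprod p)"
    by (rule coprod_eval_upto)
  also have "agree_below (Suc K) \<dots> (eval_upto K exp_fps (embed_left p + embed_right p))"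
    by (rule eval_upto_agree_below) (use p in \<open>simp add: primitive_def\<close>)
  also have "agree_below (Suc K) \<dots> (embed_left (eval_upto K exp_fps p) * embed_right (eval_upto K exp_fps p))"
    by (rule eval_upto_exp_embed_left_add_embed_right[OF p1])
  finally show ?thesis
    using vanishes_below_eval_upto_exp_minus_1[OF p1] by (simp add: group_like_def)
qed

lemma group_like_mult:
  assumes g: "group_like K g" and h: "group_like K h"
  shows "group_like K (g * h)"
proof -
  have "vanishes_below 1 ((g - 1) * h + (h - 1))"
    using g h by (auto simp: group_like_def intro!: vanishes_below_add vanishes_below_mult_left)
  moreover have "(g - 1) * h + (h - 1) = g * h - 1" by (simp add: algebra_simps)
  ultimately have "vanishes_below 1 (g * h - 1)" by simp
  moreover have "agree_below (Suc K) (coprod (g * h)) (embed_left (g * h) * embed_right (g * h))"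
  proof -
    have "coprod (g * h) = coprod g * coprod h" by (rule coprod_mult)
    also have "agree_below (Suc K) \<dots> ((embed_left g * embed_right g) * (embed_left h * embed_right h))"
      using g h by (intro agree_below_mult) (auto simp: group_like_def)
    also have "\<dots> = embed_left g * (embed_right g * embed_left h) * embed_right h"
      by (simp add: mult.assoc)
    also have "embed_right g * embed_left h = embed_left h * embed_right g"
      by (rule embed_left_right_commute[symmetric])
    also have "embed_left g * (embed_left h * embed_right g) * embed_right h
        = embed_left (g * h) * embed_right (g * h)"
      by (simp add: embed_left_mult embed_right_mult mult.assoc)
    finally show ?thesis .
  qed
  ultimately show ?thesis by (simp add: group_like_def)
qed

lemma primitive_log1p:
  assumes g: "group_like K g"
  shows "primitive K (eval_upto K log1p_fps (g - 1))"
proof -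
  let ?p = "eval_upto K log1p_fps (g - 1)" and ?E = "eval_upto K exp_fps"
  have g1: "vanishes_below 1 (g - 1)" using g by (simp add: group_like_def)
  have p1: "vanishes_below 1 ?p" using g1 by (rule vanishes_below_eval_upto) simp
  have expp: "agree_below (Suc K) (?E ?p) g" by (rule eval_upto_exp_log1p[OF g1])
  have "?E (coprod ?p) = coprod (?E ?p)" by (simp add: coprod_eval_upto)
  also have "agree_below (Suc K) \<dots> (coprod g)" by (rule coprod_agree_below[OF expp])
  also have "agree_below (Suc K) \<dots> (embed_left g * embed_right g)" using g by (simp add: group_like_def)
  also have "agree_below (Suc K) \<dots> (embed_left (?E ?p) * embed_right (?E ?p))"
    by (intro agree_below_mult embed_left_agree_below embed_right_agree_below agree_below_sym[OF expp])
  also have "agree_below (Suc K) \<dots> (?E (embed_left ?p + embed_right ?p))"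
    by (rule agree_below_sym[OF eval_upto_exp_embed_left_add_embed_right[OF p1]])
  finally have "agree_below (Suc K) (coprod ?p) (embed_left ?p + embed_right ?p)"
    by (rule eval_upto_exp_agree_below_cancel[rotated 2])
      (use p1 in \<open>auto intro: coprod_vanishes_below embed_left_vanishes_below
        embed_right_vanishes_below vanishes_below_add\<close>)
  with p1 show ?thesis by (simp add: primitive_def)
qed

section \<open>The Dynkin--Specht--Wever lemma\<close>

lemma lin_ext_mult_single: "lin_ext B (x * Poly_Mapping.single k 1) = lin_ext (\<lambda>w. B (w + k)) x"
proof -
  have "lin_ext B (x * Poly_Mapping.single k 1) = lin_ext (\<lambda>w. lin_ext B (Poly_Mapping.single w 1 * Poly_Mapping.single k 1)) x"
    by (rule lin_ext_mult_eq_lin_ext_single_mult)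
  then show ?thesis by (simp add: mult_single lin_ext_single)
qed

lemma letter_mult_single: "letter a * Poly_Mapping.single w 1 = Poly_Mapping.single (a # w) 1"
  by (simp add: letter_def mult_single list_plus)

lemma single_mult_letter: "Poly_Mapping.single w 1 * letter a = Poly_Mapping.single (w @ [a]) 1"
  by (simp add: letter_def mult_single list_plus)

text \<open>With the antipode \<open>S u = (-1)\<^bsup>|u|\<^esup> rev u\<close> and the degree operator \<open>D v = |v| v\<close>,
  \<open>antipode_conv\<close> is \<open>\<mu> \<circ> (S \<otimes> id)\<close> and \<open>dynkin_conv\<close> is \<open>\<mu> \<circ> (S \<otimes> D)\<close>.\<close>

definition antipode_conv_basis :: "nat list \<times> nat list \<Rightarrow> ncpoly" where
  "antipode_conv_basis w = scalar ((-1) ^ length (fst w)) * Poly_Mapping.single (rev (fst w) @ snd w) 1"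

definition dynkin_conv_basis :: "nat list \<times> nat list \<Rightarrow> ncpoly" where
  "dynkin_conv_basis w =
    scalar ((-1) ^ length (fst w) * real (length (snd w))) * Poly_Mapping.single (rev (fst w) @ snd w) 1"

abbreviation antipode_conv :: "ncpoly2 \<Rightarrow> ncpoly" where
  "antipode_conv \<equiv> lin_ext antipode_conv_basis"

abbreviation dynkin_conv :: "ncpoly2 \<Rightarrow> ncpoly" where
  "dynkin_conv \<equiv> lin_ext dynkin_conv_basis"

lemma antipode_conv_basis_plus_left:
  "antipode_conv_basis (w + ([a], [])) = - (letter a * antipode_conv_basis w)"
  by (cases w) (simp add: antipode_conv_basis_def list_plus mult_scalar_left_commute letter_mult_single
      flip: mult_minus_left scalar_uminus)

lemma antipode_conv_basis_plus_right:
  "antipode_conv_basis (w + ([], [a])) = antipode_conv_basis w * letter a"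
  by (cases w) (simp add: antipode_conv_basis_def list_plus mult.assoc single_mult_letter)

lemma dynkin_conv_basis_plus_left:
  "dynkin_conv_basis (w + ([a], [])) = - (letter a * dynkin_conv_basis w)"
  by (cases w) (simp add: dynkin_conv_basis_def list_plus mult_scalar_left_commute letter_mult_single
      flip: mult_minus_left scalar_uminus)

lemma dynkin_conv_basis_plus_right:
  "dynkin_conv_basis (w + ([], [a])) = dynkin_conv_basis w * letter a + antipode_conv_basis w * letter a"
  by (cases w) (simp add: dynkin_conv_basis_def antipode_conv_basis_def list_plus mult.assoc
      single_mult_letter flip: distrib_right scalar_add, simp add: algebra_simps)

lemma antipode_conv_coprod_word: "antipode_conv (coprod_word w) = (if w = [] then 1 else 0)"
proof (induction w rule: rev_induct)
  case Nil
  have "antipode_conv 1 = 1"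
    by (rule lin_ext_1) (simp add: antipode_conv_basis_def zero_prod_def list_zero single_Nil)
  then show ?case by (simp add: coprod_word_def)
next
  case (snoc a w)
  have "antipode_conv (coprod_word (w @ [a]))
      = - (letter a * antipode_conv (coprod_word w)) + antipode_conv (coprod_word w) * letter a"
    by (simp add: coprod_word_snoc distrib_left lin_ext_add left_word_def right_word_def
        lin_ext_mult_single antipode_conv_basis_plus_left antipode_conv_basis_plus_right
        lin_ext_uminus_fun lin_ext_mult_left lin_ext_mult_right)
  with snoc show ?case by simp
qed

definition left_bracket :: "nat list \<Rightarrow> ncpoly" where
  "left_bracket w = (case w of [] \<Rightarrow> 0 | a # v \<Rightarrow> foldl (\<lambda>x b. x * letter b - letter b * x) (letter a) v)"

lemma left_bracket_Nil [simp]: "left_bracket [] = 0"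
  by (simp add: left_bracket_def)

lemma left_bracket_singleton [simp]: "left_bracket [a] = letter a"
  by (simp add: left_bracket_def)

lemma left_bracket_snoc:
  "w \<noteq> [] \<Longrightarrow> left_bracket (w @ [a]) = left_bracket w * letter a - letter a * left_bracket w"
  by (cases w) (simp_all add: left_bracket_def)

lemma dynkin_conv_coprod_word: "dynkin_conv (coprod_word w) = left_bracket w"
proof (induction w rule: rev_induct)
  case Nil
  have "dynkin_conv 1 = 0"
    using lin_ext_single[of dynkin_conv_basis "([], [])" 1] by (simp add: dynkin_conv_basis_def single_Nil_Nil)
  then show ?case by (simp add: coprod_word_def left_bracket_def)
next
  case (snoc a w)
  have "dynkin_conv (coprod_word (w @ [a]))
      = - (letter a * dynkin_conv (coprod_word w)) + dynkin_conv (coprod_word w) * letter a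
        + antipode_conv (coprod_word w) * letter a"
    by (simp add: coprod_word_snoc distrib_left lin_ext_add left_word_def right_word_def
        lin_ext_mult_single dynkin_conv_basis_plus_left dynkin_conv_basis_plus_right
        lin_ext_uminus_fun lin_ext_add_fun lin_ext_mult_left lin_ext_mult_right)
  with snoc show ?case
    by (cases "w = []") (simp_all add: antipode_conv_coprod_word left_bracket_snoc)
qed

abbreviation deg_scale :: "ncpoly \<Rightarrow> ncpoly" where
  "deg_scale \<equiv> lin_ext (\<lambda>w. scalar (real (length w)) * Poly_Mapping.single w 1)"

abbreviation deg_unscale :: "ncpoly \<Rightarrow> ncpoly" where
  "deg_unscale \<equiv> lin_ext (\<lambda>w. scalar (1 / real (length w)) * Poly_Mapping.single w 1)"

lemma dynkin_conv_embed_left: "dynkin_conv (embed_left p) = 0"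
  by (simp add: lin_ext_lin_ext left_word_def lin_ext_single dynkin_conv_basis_def lin_ext_zero_fun)

lemma dynkin_conv_embed_right: "dynkin_conv (embed_right p) = deg_scale p"
  unfolding lin_ext_lin_ext
  by (rule lin_ext_cong) (simp add: right_word_def lin_ext_single dynkin_conv_basis_def)

lemma deg_unscale_deg_scale:
  assumes "vanishes_below 1 p"
  shows "deg_unscale (deg_scale p) = p"
proof -
  have "deg_unscale (deg_scale p) = lin_ext (\<lambda>w. Poly_Mapping.single w 1) p"
    unfolding lin_ext_lin_ext
  proof (rule lin_ext_cong)
    fix w assume "w \<in> Poly_Mapping.keys p"
    then have "w \<noteq> []" using assms by (auto simp: vanishes_below_def in_keys_iff deg_list)
    then show "deg_unscale (scalar (real (length w)) * Poly_Mapping.single w 1) = Poly_Mapping.single w 1"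
      by (simp add: lin_ext_scalar_mult lin_ext_single scalar_mult_assoc)
  qed
  then show ?thesis by (simp add: lin_ext_single_1)
qed

definition homogeneous :: "nat \<Rightarrow> ncpoly \<Rightarrow> bool" where
  "homogeneous n x \<longleftrightarrow> (\<forall>w\<in>Poly_Mapping.keys x. length w = n)"

lemma homogeneous_diff: "homogeneous n x \<Longrightarrow> homogeneous n y \<Longrightarrow> homogeneous n (x - y)"
  unfolding homogeneous_def using keys_diff[of x y] by blast

lemma homogeneous_mult:
  assumes "homogeneous m x" "homogeneous n y"
  shows "homogeneous (m + n) (x * y)"
  unfolding homogeneous_def
proof
  fix w assume "w \<in> Poly_Mapping.keys (x * y)"
  then obtain a b where "w = a + b" "a \<in> Poly_Mapping.keys x" "b \<in> Poly_Mapping.keys y"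
    using keys_mult[of x y] by blast
  then show "length w = m + n" using assms by (simp add: homogeneous_def list_plus)
qed

lemma homogeneous_left_bracket: "homogeneous (length w) (left_bracket w)"
proof (induction w rule: rev_induct)
  case Nil
  then show ?case by (simp add: homogeneous_def)
next
  case (snoc a w)
  have hom_letter: "homogeneous 1 (letter a)" by (simp add: homogeneous_def letter_def)
  show ?case
  proof (cases "w = []")
    case True
    then show ?thesis using hom_letter by (simp add: left_bracket_snoc)
  next
    case False
    then show ?thesis
      using homogeneous_diff[OF homogeneous_mult[OF snoc hom_letter]
          homogeneous_mult[OF hom_letter snoc, unfolded add.commute[of 1]]]
      by (simp add: left_bracket_snoc)
  qed
qed

lemma deg_unscale_homogeneous:
  assumes "homogeneous n x"
  shows "deg_unscale x = scalar (1 / real n) * x"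
proof -
  have "deg_unscale x = lin_ext (\<lambda>w. scalar (1 / real n) * Poly_Mapping.single w 1) x"
    by (rule lin_ext_cong) (use assms in \<open>simp add: homogeneous_def\<close>)
  also have "\<dots> = scalar (1 / real n) * x"
    by (simp add: lin_ext_mult_left lin_ext_single_1)
  finally show ?thesis .
qed

lemma graded_map_dynkin_conv_basis: "graded_map dynkin_conv_basis"
  unfolding graded_map_def
proof
  fix w :: "nat list \<times> nat list"
  show "vanishes_below (deg w) (dynkin_conv_basis w)"
    unfolding dynkin_conv_basis_def
    by (intro vanishes_below_scalar_mult vanishes_below_single) (cases w, simp add: deg_pair deg_list)
qed

lemma graded_map_deg_unscale:
  "graded_map (\<lambda>w::nat list. scalar (1 / real (length w)) * Poly_Mapping.single w 1)"
  unfolding graded_map_def by (intro allI vanishes_below_scalar_mult vanishes_below_single order_refl)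

text \<open>Apply \<open>dynkin_conv\<close> to both sides of \<open>\<Delta> p = p \<otimes> 1 + 1 \<otimes> p\<close>.\<close>

theorem dynkin_specht_wever:
  assumes p: "primitive K p"
  shows "agree_below (Suc K) p (lin_ext (\<lambda>w. scalar (1 / real (length w)) * left_bracket w) p)"
proof -
  have p1: "vanishes_below 1 p" and p2: "agree_below (Suc K) (embed_left p + embed_right p) (coprod p)"
    using p by (simp_all add: primitive_def agree_below_sym)
  have "p = deg_unscale (dynkin_conv (embed_left p + embed_right p))"
    by (simp add: lin_ext_add dynkin_conv_embed_left dynkin_conv_embed_right deg_unscale_deg_scale[OF p1])
  also have "agree_below (Suc K) \<dots> (deg_unscale (dynkin_conv (coprod p)))"
    by (intro lin_ext_agree_below[OF graded_map_deg_unscale]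
        lin_ext_agree_below[OF graded_map_dynkin_conv_basis] p2)
  also have "deg_unscale (dynkin_conv (coprod p)) = lin_ext (\<lambda>w. deg_unscale (dynkin_conv (coprod_word w))) p"
    by (simp add: lin_ext_lin_ext)
  also have "\<dots> = lin_ext (\<lambda>w. scalar (1 / real (length w)) * left_bracket w) p"
    by (rule lin_ext_cong) (simp add: dynkin_conv_coprod_word deg_unscale_homogeneous[OF homogeneous_left_bracket])
  finally show ?thesis .
qed

section \<open>Truncation and the tensor representation\<close>

lemma Sum_any_when_append:
  fixes y :: "'a list gpoly"
  shows "Sum_any (\<lambda>q. coeff y q when w = l @ q)
    = (if take (length l) w = l then coeff y (drop (length l) w) else 0)"
proof (cases "take (length l) w = l")
  case True
  then have "w = l @ q \<longleftrightarrow> q = drop (length l) w" for q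
    by (metis append_eq_conv_conj)
  then show ?thesis using True by simp
next
  case False
  then have "(\<lambda>q. coeff y q when w = l @ q) = (\<lambda>q. 0)"
    by (auto simp: when_def fun_eq_iff)
  then have "Sum_any (\<lambda>q. coeff y q when w = l @ q) = Sum_any (\<lambda>q::'a list. 0::real)"
    by (rule arg_cong)
  then show ?thesis using False by simp
qed

lemma coeff_mult_words:
  fixes x y :: "'a list gpoly"
  shows "coeff (x * y) w = (\<Sum>i\<le>length w. coeff x (take i w) * coeff y (drop i w))"
proof -
  let ?f = "\<lambda>l. coeff x l * (if take (length l) w = l then coeff y (drop (length l) w) else 0)"
  have "coeff (x * y) w = Sum_any ?f"
    unfolding lookup_mult list_plus Sum_any_when_append ..
  also have "\<dots> = sum ?f ((\<lambda>i. take i w) ` {..length w})"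
  proof (rule Sum_any.expand_superset)
    show "{l. ?f l \<noteq> 0} \<subseteq> (\<lambda>i. take i w) ` {..length w}"
    proof
      fix l assume "l \<in> {l. ?f l \<noteq> 0}"
      then have "take (length l) w = l" by (auto split: if_splits)
      moreover from this have "length l \<le> length w" by (metis length_take min.cobounded1)
      ultimately show "l \<in> (\<lambda>i. take i w) ` {..length w}" by force
    qed
  qed simp
  also have "\<dots> = sum (?f \<circ> (\<lambda>i. take i w)) {..length w}"
    by (rule sum.reindex) (auto intro!: inj_onI simp: min_def dest: arg_cong[of _ _ length] split: if_splits)
  also have "\<dots> = (\<Sum>i\<le>length w. coeff x (take i w) * coeff y (drop i w))"
    by (rule sum.cong) (auto simp: min_def)
  finally show ?thesis .
qed

definition trunc :: "nat \<Rightarrow> ncpoly \<Rightarrow> ncpoly" where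
  "trunc K x = Abs_poly_mapping (\<lambda>w. if length w \<le> K then coeff x w else 0)"

lemma coeff_trunc: "coeff (trunc K x) w = (if length w \<le> K then coeff x w else 0)"
proof -
  have "finite {w. (if length w \<le> K then coeff x w else 0) \<noteq> 0}"
    by (rule finite_subset[of _ "Poly_Mapping.keys x"]) (auto simp: in_keys_iff)
  then show ?thesis by (simp add: trunc_def)
qed

lemma agree_below_Suc_iff: "agree_below (Suc K) x y \<longleftrightarrow> (\<forall>w. length w \<le> K \<longrightarrow> coeff x w = coeff y w)"
  by (auto simp: agree_below_def vanishes_below_def deg_list lookup_minus less_Suc_eq_le)

lemma trunc_agree_below: "agree_below (Suc K) (trunc K x) x"
  by (simp add: agree_below_Suc_iff coeff_trunc)

lemma trunc_eq_iff_agree_below: "trunc K x = trunc K y \<longleftrightarrow> agree_below (Suc K) x y"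
proof
  assume "trunc K x = trunc K y"
  then show "agree_below (Suc K) x y"
    by (metis agree_below_sym agree_below_trans trunc_agree_below)
next
  assume "agree_below (Suc K) x y"
  then show "trunc K x = trunc K y"
    by (intro poly_mapping_eqI) (simp add: agree_below_Suc_iff coeff_trunc)
qed

lemmas trunc_eqI = trunc_eq_iff_agree_below[THEN iffD2]

lemma trunc_trunc [simp]: "trunc K (trunc K x) = trunc K x"
  by (rule trunc_eqI[OF trunc_agree_below])

lemma trunc_add: "trunc K (x + y) = trunc K x + trunc K y"
  by (rule poly_mapping_eqI) (simp add: coeff_trunc lookup_add)

lemma trunc_diff: "trunc K (x - y) = trunc K x - trunc K y"
  by (rule poly_mapping_eqI) (simp add: coeff_trunc lookup_minus)

lemma trunc_scalar_mult: "trunc K (scalar c * x) = scalar c * trunc K x"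
  by (rule poly_mapping_eqI) (simp add: coeff_trunc lookup_scalar_mult)

lemma trunc_1 [simp]: "trunc K 1 = 1"
  by (rule poly_mapping_eqI) (simp add: coeff_trunc lookup_one when_def list_zero)

lemma trunc_0 [simp]: "trunc K 0 = 0"
  by (rule poly_mapping_eqI) (simp add: coeff_trunc)

lemma trunc_sum: "trunc K (sum f A) = (\<Sum>i\<in>A. trunc K (f i))"
  by (induction A rule: infinite_finite_induct) (auto simp: trunc_add)

lemma vanishes_below_trunc: "vanishes_below n x \<Longrightarrow> vanishes_below n (trunc K x)"
  by (simp add: vanishes_below_def coeff_trunc)

lemma trunc_eq_0_if_vanishes_below: "vanishes_below (Suc K) x \<Longrightarrow> trunc K x = 0"
  by (rule poly_mapping_eqI) (simp add: coeff_trunc vanishes_below_def deg_list)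

definition geom_sum :: "nat \<Rightarrow> ncpoly \<Rightarrow> ncpoly" where
  "geom_sum K v = (\<Sum>l\<le>K. v ^ l)"

definition mult_trunc :: "nat \<Rightarrow> ncpoly \<Rightarrow> ncpoly \<Rightarrow> ncpoly" where
  "mult_trunc K x y = trunc K (x * y)"

definition inverse_trunc :: "nat \<Rightarrow> ncpoly \<Rightarrow> ncpoly" where
  "inverse_trunc K m = trunc K (geom_sum K (1 - m))"

definition ln_trunc :: "nat \<Rightarrow> ncpoly \<Rightarrow> ncpoly" where
  "ln_trunc K s = trunc K (eval_upto K log1p_fps (s - 1))"

definition exp_trunc :: "nat \<Rightarrow> ncpoly \<Rightarrow> ncpoly" where
  "exp_trunc K z = trunc K (eval_upto K exp_fps z)"

lemma tadd_coeff: "tadd (coeff x) (coeff y) = coeff (x + y)"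
  by (simp add: tadd_def fun_eq_iff lookup_add)

lemma tsub_coeff: "tsub (coeff x) (coeff y) = coeff (x - y)"
  by (simp add: tsub_def fun_eq_iff lookup_minus)

lemma tscale_coeff: "tscale c (coeff x) = coeff (scalar c * x)"
  by (simp add: tscale_def fun_eq_iff lookup_scalar_mult)

lemma tunit_eq_coeff: "tunit = coeff 1"
  by (simp add: tunit_def fun_eq_iff lookup_one when_def list_zero)

lemma zero_fun_eq_coeff: "(\<lambda>w. 0) = coeff 0"
  by (simp add: fun_eq_iff)

lemma tgen_eq_coeff: "tgen K i = coeff (trunc K (letter i))"
  by (auto simp: tgen_def fun_eq_iff coeff_trunc letter_def lookup_single when_def)

lemma tmul_coeff: "tmul K (coeff x) (coeff y) = coeff (mult_trunc K x y)"
  by (simp add: tmul_def mult_trunc_def fun_eq_iff coeff_trunc coeff_mult_words)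

lemma tbracket_coeff: "tbracket K (coeff x) (coeff y) = coeff (trunc K (x * y - y * x))"
  by (simp add: tbracket_def tmul_coeff tsub_coeff mult_trunc_def trunc_diff)

lemma tpow_coeff: "tpow K (coeff x) n = coeff (trunc K (x ^ n))"
proof (induction n)
  case 0
  then show ?case by (simp add: tunit_eq_coeff)
next
  case (Suc n)
  have "trunc K (x * trunc K (x ^ n)) = trunc K (x * x ^ n)"
    by (intro trunc_eqI agree_below_mult agree_below_refl trunc_agree_below)
  then show ?case by (simp add: Suc tmul_coeff mult_trunc_def)
qed

lemma texp_coeff: "texp K (coeff x) = coeff (exp_trunc K x)"
  by (simp add: texp_def exp_trunc_def fun_eq_iff tpow_coeff coeff_trunc eval_upto_def lookup_sum
      lookup_scalar_mult sum_divide_distrib)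

lemma tlog_coeff: "tlog K (coeff s) = coeff (ln_trunc K s)"
proof
  fix w
  have "coeff (ln_trunc K s) w = (\<Sum>l\<le>K. fps_nth log1p_fps l * coeff (trunc K ((s - 1) ^ l)) w)"
    by (simp add: ln_trunc_def eval_upto_def trunc_sum trunc_scalar_mult lookup_sum lookup_scalar_mult)
  also have "\<dots> = (\<Sum>l\<in>{1..K}. fps_nth log1p_fps l * coeff (trunc K ((s - 1) ^ l)) w)"
    by (rule sum.mono_neutral_right) (auto simp: fps_ln_nth)
  also have "\<dots> = (\<Sum>l\<in>{1..K}. ((-1) ^ (l + 1) / real l) * coeff (trunc K ((s - 1) ^ l)) w)"
    by (rule sum.cong) (auto simp: fps_ln_nth power_diff)
  finally show "tlog K (coeff s) w = coeff (ln_trunc K s) w"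
    by (simp add: tlog_def tunit_eq_coeff tsub_coeff tpow_coeff)
qed

lemma tinv_coeff: "tinv K (coeff m) = coeff (inverse_trunc K m)"
  by (simp add: tinv_def inverse_trunc_def fun_eq_iff tunit_eq_coeff tsub_coeff tpow_coeff geom_sum_def
      trunc_sum lookup_sum)

section \<open>The free Lie algebra and its group\<close>

definition over_alphabet :: "nat \<Rightarrow> ncpoly \<Rightarrow> bool" where
  "over_alphabet d x \<longleftrightarrow> (\<forall>w\<in>Poly_Mapping.keys x. set w \<subseteq> {..<d})"

lemma over_alphabet_0 [simp]: "over_alphabet d 0"
  by (simp add: over_alphabet_def)

lemma over_alphabet_1 [simp]: "over_alphabet d 1"
  by (simp add: over_alphabet_def lookup_one when_def list_zero in_keys_iff)

lemma over_alphabet_add: "over_alphabet d x \<Longrightarrow> over_alphabet d y \<Longrightarrow> over_alphabet d (x + y)"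
  unfolding over_alphabet_def using keys_add[of x y] by blast

lemma over_alphabet_diff: "over_alphabet d x \<Longrightarrow> over_alphabet d y \<Longrightarrow> over_alphabet d (x - y)"
  unfolding over_alphabet_def using keys_diff[of x y] by blast

lemma over_alphabet_scalar_mult: "over_alphabet d x \<Longrightarrow> over_alphabet d (scalar c * x)"
  unfolding over_alphabet_def by (auto simp: in_keys_iff lookup_scalar_mult)

lemma over_alphabet_mult:
  assumes "over_alphabet d x" "over_alphabet d y"
  shows "over_alphabet d (x * y)"
  unfolding over_alphabet_def
proof
  fix w assume "w \<in> Poly_Mapping.keys (x * y)"
  then obtain a b where "w = a + b" "a \<in> Poly_Mapping.keys x" "b \<in> Poly_Mapping.keys y"
    using keys_mult[of x y] by blast
  then show "set w \<subseteq> {..<d}" using assms by (auto simp: over_alphabet_def list_plus)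
qed

lemma over_alphabet_sum: "(\<And>i. i \<in> A \<Longrightarrow> over_alphabet d (f i)) \<Longrightarrow> over_alphabet d (sum f A)"
  by (induction A rule: infinite_finite_induct) (auto intro: over_alphabet_add)

lemma over_alphabet_eval_upto: "over_alphabet d x \<Longrightarrow> over_alphabet d (eval_upto K f x)"
proof -
  assume x: "over_alphabet d x"
  have "over_alphabet d (x ^ n)" for n
    by (induction n) (simp_all add: over_alphabet_mult x)
  then show ?thesis
    unfolding eval_upto_def by (intro over_alphabet_sum over_alphabet_scalar_mult)
qed

lemma over_alphabet_trunc: "over_alphabet d x \<Longrightarrow> over_alphabet d (trunc K x)"
  unfolding over_alphabet_def by (auto simp: in_keys_iff coeff_trunc split: if_splits)

definition lie_polys :: "nat \<Rightarrow> nat \<Rightarrow> ncpoly set" where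
  "lie_polys d K = {a. primitive K a \<and> trunc K a = a \<and> over_alphabet d a}"

lemma zero_in_lie_polys: "0 \<in> lie_polys d K"
  by (simp add: lie_polys_def primitive_def over_alphabet_def)

lemma lie_polys_add: "a \<in> lie_polys d K \<Longrightarrow> b \<in> lie_polys d K \<Longrightarrow> a + b \<in> lie_polys d K"
  by (auto simp: lie_polys_def primitive_add trunc_add over_alphabet_add)

lemma lie_polys_scalar_mult: "a \<in> lie_polys d K \<Longrightarrow> scalar c * a \<in> lie_polys d K"
  by (auto simp: lie_polys_def primitive_scalar_mult trunc_scalar_mult over_alphabet_scalar_mult)

lemma lie_polys_uminus: "a \<in> lie_polys d K \<Longrightarrow> - a \<in> lie_polys d K"
  using lie_polys_scalar_mult[of a d K "-1"] by (simp add: scalar_uminus)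

lemma lie_polys_sum: "(\<And>i. i \<in> A \<Longrightarrow> f i \<in> lie_polys d K) \<Longrightarrow> sum f A \<in> lie_polys d K"
  by (induction A rule: infinite_finite_induct) (auto intro: lie_polys_add zero_in_lie_polys)

lemma trunc_primitive_in_lie_polys:
  "primitive K a \<Longrightarrow> over_alphabet d a \<Longrightarrow> trunc K a \<in> lie_polys d K"
  unfolding lie_polys_def
  by (auto intro: primitive_agree_below[OF trunc_agree_below] over_alphabet_trunc)

lemma lie_polys_vanishes_below: "a \<in> lie_polys d K \<Longrightarrow> vanishes_below 1 a"
  by (simp add: lie_polys_def primitive_def)

lemma lie_polys_trunc: "a \<in> lie_polys d K \<Longrightarrow> trunc K a = a"
  by (simp add: lie_polys_def)

lemma lie_alg_subset_coeff_lie_polys: "a \<in> lie_alg d K \<Longrightarrow> \<exists>x\<in>lie_polys d K. a = coeff x"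
proof (induction rule: lie_alg.induct)
  case zero
  then show ?case using zero_in_lie_polys by (auto simp: zero_fun_eq_coeff)
next
  case (gen i)
  have "trunc K (letter i) \<in> lie_polys d K"
    using gen by (intro trunc_primitive_in_lie_polys primitive_letter) (simp add: over_alphabet_def letter_def)
  then show ?case by (auto simp: tgen_eq_coeff)
next
  case (add a b)
  then show ?case by (auto simp: tadd_coeff intro: lie_polys_add)
next
  case (scale a c)
  then show ?case by (auto simp: tscale_coeff intro: lie_polys_scalar_mult)
next
  case (bracket a b)
  then obtain x y where xy: "x \<in> lie_polys d K" "y \<in> lie_polys d K" "a = coeff x" "b = coeff y"
    by blast
  then have "trunc K (x * y - y * x) \<in> lie_polys d K"
    by (intro trunc_primitive_in_lie_polys primitive_commutator)
      (auto simp: lie_polys_def intro: over_alphabet_diff over_alphabet_mult)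
  then show ?case using xy by (auto simp: tbracket_coeff)
qed

lemma coeff_sum_in_lie_alg:
  "(\<And>i. i \<in> A \<Longrightarrow> coeff (f i) \<in> lie_alg d K) \<Longrightarrow> coeff (sum f A) \<in> lie_alg d K"
proof (induction A rule: infinite_finite_induct)
  case (insert x F)
  then show ?case using lie_alg.add[of "coeff (f x)" d K "coeff (sum f F)"] by (simp add: tadd_coeff)
qed (use lie_alg.zero in \<open>simp_all add: zero_fun_eq_coeff\<close>)

lemma coeff_left_bracket_in_lie_alg:
  "set w \<subseteq> {..<d} \<Longrightarrow> coeff (trunc K (left_bracket w)) \<in> lie_alg d K"
proof (induction w rule: rev_induct)
  case Nil
  then show ?case using lie_alg.zero by (simp add: zero_fun_eq_coeff)
next
  case (snoc a w)
  then have letter_in: "coeff (trunc K (letter a)) \<in> lie_alg d K"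
    using lie_alg.gen[of a d K] by (simp add: tgen_eq_coeff)
  show ?case
  proof (cases "w = []")
    case True
    then show ?thesis using letter_in by simp
  next
    case False
    have "trunc K (left_bracket (w @ [a]))
        = trunc K (trunc K (left_bracket w) * trunc K (letter a) - trunc K (letter a) * trunc K (left_bracket w))"
      using False
      by (simp add: left_bracket_snoc)
        (intro trunc_eqI agree_below_diff agree_below_mult agree_below_sym[OF trunc_agree_below])
    then have "coeff (trunc K (left_bracket (w @ [a])))
        = tbracket K (coeff (trunc K (left_bracket w))) (coeff (trunc K (letter a)))"
      by (simp add: tbracket_coeff)
    then show ?thesis using snoc letter_in by (simp add: lie_alg.bracket)
  qed
qed

lemma coeff_lie_polys_in_lie_alg:
  assumes x: "x \<in> lie_polys d K"
  shows "coeff x \<in> lie_alg d K"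
proof -
  have "primitive K x" "trunc K x = x" using x by (simp_all add: lie_polys_def)
  then have "x = trunc K (lin_ext (\<lambda>w. scalar (1 / real (length w)) * left_bracket w) x)"
    using trunc_eqI[OF dynkin_specht_wever] by metis
  also have "\<dots> = (\<Sum>w\<in>Poly_Mapping.keys x. scalar (coeff x w / real (length w)) * trunc K (left_bracket w))"
    by (simp add: lin_ext_def trunc_sum trunc_scalar_mult scalar_mult_assoc)
  finally have x_eq: "x = \<dots>" .
  have "coeff (\<Sum>w\<in>Poly_Mapping.keys x. scalar (coeff x w / real (length w)) * trunc K (left_bracket w))
      \<in> lie_alg d K"
  proof (rule coeff_sum_in_lie_alg)
    fix w assume "w \<in> Poly_Mapping.keys x"
    then have "set w \<subseteq> {..<d}" using x by (auto simp: lie_polys_def over_alphabet_def)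
    then show "coeff (scalar (coeff x w / real (length w)) * trunc K (left_bracket w)) \<in> lie_alg d K"
      by (metis tscale_coeff lie_alg.scale coeff_left_bracket_in_lie_alg)
  qed
  then show ?thesis using x_eq by simp
qed

theorem lie_alg_eq_coeff_lie_polys: "lie_alg d K = coeff ` lie_polys d K"
  using lie_alg_subset_coeff_lie_polys coeff_lie_polys_in_lie_alg by blast

definition group_polys :: "nat \<Rightarrow> nat \<Rightarrow> ncpoly set" where
  "group_polys d K = exp_trunc K ` lie_polys d K"

theorem grp_eq_coeff_group_polys: "grp d K = coeff ` group_polys d K"
  by (auto simp: grp_def group_polys_def lie_alg_eq_coeff_lie_polys image_image texp_coeff)

lemma exp_trunc_in_group_polys: "a \<in> lie_polys d K \<Longrightarrow> exp_trunc K a \<in> group_polys d K"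
  by (simp add: group_polys_def)

lemma exp_trunc_0: "exp_trunc K 0 = 1"
  by (simp add: exp_trunc_def eval_upto_at_0)

lemma one_in_group_polys: "1 \<in> group_polys d K"
  using exp_trunc_in_group_polys[OF zero_in_lie_polys] by (simp add: exp_trunc_0)

lemma group_polys_trunc: "g \<in> group_polys d K \<Longrightarrow> trunc K g = g"
  by (auto simp: group_polys_def exp_trunc_def)

lemma group_polys_vanishes_below:
  assumes "g \<in> group_polys d K"
  shows "vanishes_below 1 (g - 1)"
proof -
  obtain a where a: "a \<in> lie_polys d K" and g: "g = trunc K (eval_upto K exp_fps a)"
    using assms by (auto simp: group_polys_def exp_trunc_def)
  have "vanishes_below 1 (trunc K (eval_upto K exp_fps a - 1))"
    by (intro vanishes_below_trunc vanishes_below_eval_upto_exp_minus_1 lie_polys_vanishes_below[OF a])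
  then show ?thesis by (simp add: g trunc_diff)
qed

lemma ln_trunc_exp_trunc:
  assumes a: "a \<in> lie_polys d K"
  shows "ln_trunc K (exp_trunc K a) = a"
proof -
  have "agree_below (Suc K) (exp_trunc K a - 1) (eval_upto K exp_fps a - 1)"
    unfolding exp_trunc_def by (intro agree_below_diff trunc_agree_below agree_below_refl)
  then have "agree_below (Suc K) (exp_trunc K a - 1) (eval_upto K expm1_fps a)"
    by (simp add: eval_upto_exp_fps)
  then have "agree_below (Suc K) (eval_upto K log1p_fps (exp_trunc K a - 1))
      (eval_upto K log1p_fps (eval_upto K expm1_fps a))"
    by (rule eval_upto_agree_below)
  also have "agree_below (Suc K) \<dots> a"
    by (rule eval_upto_log1p_expm1[OF lie_polys_vanishes_below[OF a]])
  finally show ?thesis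
    using trunc_eqI lie_polys_trunc[OF a] unfolding ln_trunc_def by metis
qed

lemma
  assumes "g \<in> group_polys d K"
  shows ln_trunc_in_lie_polys: "ln_trunc K g \<in> lie_polys d K"
    and exp_trunc_ln_trunc: "exp_trunc K (ln_trunc K g) = g"
  using assms by (auto simp: group_polys_def ln_trunc_exp_trunc)

lemma mult_trunc_in_group_polys:
  assumes g: "g \<in> group_polys d K" and h: "h \<in> group_polys d K"
  shows "mult_trunc K g h \<in> group_polys d K"
proof -
  obtain a b where a: "a \<in> lie_polys d K" and b: "b \<in> lie_polys d K"
    and ga: "g = exp_trunc K a" and hb: "h = exp_trunc K b"
    using g h by (auto simp: group_polys_def)
  let ?q = "eval_upto K exp_fps a * eval_upto K exp_fps b"
  let ?p = "eval_upto K log1p_fps (?q - 1)"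
  have q: "group_like K ?q"
    using a b by (intro group_like_mult group_like_exp) (auto simp: lie_polys_def)
  have "trunc K ?p \<in> lie_polys d K"
    using a b primitive_log1p[OF q]
    by (intro trunc_primitive_in_lie_polys)
      (auto simp: lie_polys_def intro!: over_alphabet_eval_upto over_alphabet_diff over_alphabet_mult)
  moreover have "exp_trunc K (trunc K ?p) = mult_trunc K g h"
  proof -
    have "exp_trunc K (trunc K ?p) = trunc K (eval_upto K exp_fps ?p)"
      unfolding exp_trunc_def by (intro trunc_eqI eval_upto_agree_below trunc_agree_below)
    also have "\<dots> = trunc K ?q"
      by (rule trunc_eqI[OF eval_upto_exp_log1p]) (use q in \<open>simp add: group_like_def\<close>)
    also have "\<dots> = mult_trunc K g h"
      unfolding mult_trunc_def ga hb exp_trunc_def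
      by (intro trunc_eqI agree_below_mult agree_below_sym[OF trunc_agree_below])
    finally show ?thesis .
  qed
  ultimately show ?thesis
    using exp_trunc_in_group_polys by metis
qed

lemma mult_trunc_assoc: "mult_trunc K (mult_trunc K x y) z = mult_trunc K x (mult_trunc K y z)"
proof -
  have "mult_trunc K (mult_trunc K x y) z = trunc K (x * y * z)"
    unfolding mult_trunc_def by (intro trunc_eqI agree_below_mult trunc_agree_below agree_below_refl)
  moreover have "mult_trunc K x (mult_trunc K y z) = trunc K (x * (y * z))"
    unfolding mult_trunc_def by (intro trunc_eqI agree_below_mult trunc_agree_below agree_below_refl)
  ultimately show ?thesis by (simp add: mult.assoc)
qed

lemma mult_trunc_1_left: "mult_trunc K 1 x = trunc K x"
  by (simp add: mult_trunc_def)

lemma mult_trunc_1_right: "mult_trunc K x 1 = trunc K x"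
  by (simp add: mult_trunc_def)

lemma geom_sum_telescope:
  "(1 - v) * geom_sum K v = 1 - v ^ Suc K \<and> geom_sum K v * (1 - v) = 1 - v ^ Suc K"
proof (induction K)
  case 0
  then show ?case by (simp add: geom_sum_def)
next
  case (Suc K)
  have step: "geom_sum (Suc K) v = geom_sum K v + v ^ Suc K"
    by (simp add: geom_sum_def)
  have "(1 - v) * geom_sum (Suc K) v = (1 - v) * geom_sum K v + (1 - v) * v ^ Suc K"
    by (simp only: step distrib_left)
  also have "\<dots> = 1 - v ^ Suc K + (v ^ Suc K - v * v ^ Suc K)"
    using Suc by (simp only: left_diff_distrib mult_1_left)
  finally have left: "(1 - v) * geom_sum (Suc K) v = 1 - v ^ Suc (Suc K)"
    by simp
  have "geom_sum (Suc K) v * (1 - v) = geom_sum K v * (1 - v) + v ^ Suc K * (1 - v)"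
    by (simp only: step distrib_right)
  also have "\<dots> = 1 - v ^ Suc K + (v ^ Suc K - v ^ Suc K * v)"
    using Suc by (simp only: right_diff_distrib mult_1_right)
  finally have "geom_sum (Suc K) v * (1 - v) = 1 - v ^ Suc (Suc K)"
    by (simp add: power_Suc2[symmetric] del: power_Suc)
  with left show ?case by simp
qed

lemma
  assumes "g \<in> group_polys d K"
  shows mult_trunc_inverse_trunc_left: "mult_trunc K (inverse_trunc K g) g = 1"
    and mult_trunc_inverse_trunc_right: "mult_trunc K g (inverse_trunc K g) = 1"
proof -
  have "vanishes_below 1 (1 - g)"
    using vanishes_below_uminus[OF group_polys_vanishes_below[OF assms]] by simp
  then have high: "agree_below (Suc K) (1 - (1 - g) ^ Suc K) 1"
    using vanishes_below_1_power[of "1 - g" "Suc K"] by (simp add: agree_below_def vanishes_below_uminus)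
  have one: "trunc K (1 - (1 - g) ^ Suc K) = 1"
    using trunc_eqI[OF high] by (simp only: trunc_1)
  have "mult_trunc K (inverse_trunc K g) g = trunc K (geom_sum K (1 - g) * (1 - (1 - g)))"
    unfolding mult_trunc_def inverse_trunc_def
    by (intro trunc_eqI agree_below_mult trunc_agree_below) simp
  also have "\<dots> = 1"
    by (simp only: geom_sum_telescope[THEN conjunct2] one)
  finally show "mult_trunc K (inverse_trunc K g) g = 1" .
  have "mult_trunc K g (inverse_trunc K g) = trunc K ((1 - (1 - g)) * geom_sum K (1 - g))"
    unfolding mult_trunc_def inverse_trunc_def
    by (intro trunc_eqI agree_below_mult trunc_agree_below) simp
  also have "\<dots> = 1"
    by (simp only: geom_sum_telescope[THEN conjunct1] one)
  finally show "mult_trunc K g (inverse_trunc K g) = 1" .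
qed

lemma inverse_trunc_unique:
  assumes g: "g \<in> group_polys d K" and h: "trunc K h = h" and hg: "mult_trunc K h g = 1"
  shows "inverse_trunc K g = h"
proof -
  have "h = mult_trunc K h (mult_trunc K g (inverse_trunc K g))"
    by (simp add: mult_trunc_inverse_trunc_right[OF g] mult_trunc_1_right h)
  also have "\<dots> = inverse_trunc K g"
    by (simp flip: mult_trunc_assoc add: hg mult_trunc_1_left inverse_trunc_def)
  finally show ?thesis by simp
qed

lemma inverse_trunc_exp_trunc:
  assumes a: "a \<in> lie_polys d K"
  shows "inverse_trunc K (exp_trunc K a) = exp_trunc K (- a)"
proof (rule inverse_trunc_unique[OF exp_trunc_in_group_polys[OF a]])
  show "trunc K (exp_trunc K (- a)) = exp_trunc K (- a)"
    by (simp add: exp_trunc_def)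
  have a1: "vanishes_below 1 a" by (rule lie_polys_vanishes_below[OF a])
  have "mult_trunc K (exp_trunc K (- a)) (exp_trunc K a)
      = trunc K (eval_upto K exp_fps (- a) * eval_upto K exp_fps a)"
    unfolding mult_trunc_def exp_trunc_def by (intro trunc_eqI agree_below_mult trunc_agree_below)
  also have "\<dots> = trunc K (eval_upto K exp_fps (- a + a))"
    by (intro trunc_eqI eval_upto_exp_add) (use a1 in \<open>auto intro: vanishes_below_uminus\<close>)
  also have "\<dots> = 1"
    by (simp add: eval_upto_at_0)
  finally show "mult_trunc K (exp_trunc K (- a)) (exp_trunc K a) = 1" .
qed

lemma inverse_trunc_in_group_polys:
  "g \<in> group_polys d K \<Longrightarrow> inverse_trunc K g \<in> group_polys d K"
  by (auto simp: group_polys_def inverse_trunc_exp_trunc lie_polys_uminus)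

lemma inverse_trunc_mult_trunc:
  assumes g: "g \<in> group_polys d K" and h: "h \<in> group_polys d K"
  shows "inverse_trunc K (mult_trunc K g h) = mult_trunc K (inverse_trunc K h) (inverse_trunc K g)"
proof (rule inverse_trunc_unique[OF mult_trunc_in_group_polys[OF g h]])
  show "trunc K (mult_trunc K (inverse_trunc K h) (inverse_trunc K g))
      = mult_trunc K (inverse_trunc K h) (inverse_trunc K g)"
    by (simp add: mult_trunc_def)
  have "mult_trunc K (inverse_trunc K g) (mult_trunc K g h) = h"
    by (simp flip: mult_trunc_assoc add: mult_trunc_inverse_trunc_left[OF g] mult_trunc_1_left
        group_polys_trunc[OF h])
  then show "mult_trunc K (mult_trunc K (inverse_trunc K h) (inverse_trunc K g)) (mult_trunc K g h) = 1"
    by (simp add: mult_trunc_assoc mult_trunc_inverse_trunc_left[OF h])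
qed

section \<open>Solving the barycentre equation degree by degree\<close>

lemma power_add_agree_below:
  fixes v u :: ncpoly
  assumes v: "vanishes_below 1 v" and u: "vanishes_below n u" and n: "1 \<le> n"
  shows "agree_below (Suc n) ((v + u) ^ l) (v ^ l + (if l = 1 then u else 0))"
proof (induction l)
  case 0
  then show ?case by simp
next
  case (Suc l)
  let ?X = "if l = 1 then u else 0"
  have X: "vanishes_below n ?X" using u by simp
  have "(v + u) ^ Suc l = (v + u) * (v + u) ^ l" by simp
  also have "agree_below (Suc n) \<dots> ((v + u) * (v ^ l + ?X))"
    by (intro agree_below_mult agree_below_refl Suc)
  also have "agree_below (Suc n) \<dots> (v ^ Suc l + (if Suc l = 1 then u else 0))"
  proof (cases l)
    case 0
    then show ?thesis by simp
  next
    case (Suc l')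
    have "(v + u) * (v ^ l + ?X) - v ^ Suc l = v * ?X + u * v ^ l + u * ?X"
      by (simp add: algebra_simps)
    moreover have "vanishes_below (Suc n) (v * ?X)"
      using vanishes_below_mult[OF v X] by simp
    moreover have "vanishes_below (Suc n) (u * v ^ l)"
      using vanishes_below_mult[OF u vanishes_below_1_power[OF v, of l]] Suc vanishes_below_mono by fastforce
    moreover have "vanishes_below (Suc n) (u * ?X)"
      using vanishes_below_mult[OF u X] n vanishes_below_mono by fastforce
    ultimately show ?thesis
      using Suc by (simp add: agree_below_def vanishes_below_add)
  qed
  finally show ?case .
qed

lemma eval_upto_log1p_add_agree_below:
  fixes v u :: ncpoly
  assumes v: "vanishes_below 1 v" and u: "vanishes_below n u" and n: "1 \<le> n" and K: "1 \<le> K"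
  shows "agree_below (Suc n) (eval_upto K log1p_fps (v + u)) (eval_upto K log1p_fps v + u)"
proof -
  have "agree_below (Suc n) (eval_upto K log1p_fps (v + u))
      (\<Sum>l\<le>K. scalar (fps_nth log1p_fps l) * (v ^ l + (if l = 1 then u else 0)))"
    unfolding eval_upto_def by (intro agree_below_sum agree_below_scalar_mult power_add_agree_below v u n)
  also have "\<dots> = eval_upto K log1p_fps v + (\<Sum>l\<le>K. scalar (fps_nth log1p_fps l) * (if l = 1 then u else 0))"
    by (simp only: eval_upto_def distrib_left sum.distrib)
  also have "(\<Sum>l\<le>K. scalar (fps_nth log1p_fps l) * (if l = 1 then u else 0)) = scalar (fps_nth log1p_fps 1) * u"
    using K by (simp add: if_distrib[of "(*) _"] sum.delta cong: if_cong)
  also have "eval_upto K log1p_fps v + scalar (fps_nth log1p_fps 1) * u = eval_upto K log1p_fps v + u"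
    by (simp add: fps_ln_nth)
  finally show ?thesis .
qed

lemma eval_upto_expm1_agree_below:
  fixes z :: ncpoly
  assumes z: "vanishes_below n z" and n: "1 \<le> n" and K: "1 \<le> K"
  shows "agree_below (Suc n) (eval_upto K expm1_fps z) z"
proof -
  have "eval_upto K expm1_fps z
      = scalar (fps_nth expm1_fps 1) * z ^ 1 + (\<Sum>l\<in>{..K} - {1}. scalar (fps_nth expm1_fps l) * z ^ l)"
    unfolding eval_upto_def using K by (subst sum.remove[of _ 1]) auto
  moreover have "vanishes_below (Suc n) (\<Sum>l\<in>{..K} - {1}. scalar (fps_nth expm1_fps l) * z ^ l)"
  proof (rule vanishes_below_sum)
    fix l assume l: "l \<in> {..K} - {1}"
    show "vanishes_below (Suc n) (scalar (fps_nth expm1_fps l) * z ^ l)"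
    proof (cases "l = 0")
      case False
      with l have "n * 2 \<le> n * l" by auto
      with n have "Suc n \<le> n * l" by linarith
      then show ?thesis
        using vanishes_below_power[OF z, of l] by (intro vanishes_below_scalar_mult) (rule vanishes_below_mono)
    qed simp
  qed
  ultimately show ?thesis by (simp add: agree_below_def)
qed

lemma ln_trunc_cong: "agree_below (Suc K) a b \<Longrightarrow> ln_trunc K a = ln_trunc K b"
  unfolding ln_trunc_def by (intro trunc_eqI eval_upto_agree_below agree_below_diff agree_below_refl)

lemma ln_trunc_mult_agree_below:
  fixes s u :: ncpoly
  assumes s: "vanishes_below 1 (s - 1)" and u: "vanishes_below n u" and n: "1 \<le> n" "n \<le> K"
  shows "agree_below (Suc n) (ln_trunc K ((1 + u) * s)) (ln_trunc K s + u)"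
proof -
  let ?v = "s - 1" and ?u' = "u + u * (s - 1)"
  have uv: "vanishes_below (Suc n) (u * (s - 1))"
    using vanishes_below_mult[OF u s] by simp
  have u': "vanishes_below n ?u'"
    using u vanishes_below_mono[OF uv, of n] by (intro vanishes_below_add) auto
  have "ln_trunc K ((1 + u) * s) = trunc K (eval_upto K log1p_fps (?v + ?u'))"
    by (simp add: ln_trunc_def algebra_simps)
  also have "agree_below (Suc n) \<dots> (eval_upto K log1p_fps (?v + ?u'))"
    using trunc_agree_below agree_below_mono n by blast
  also have "agree_below (Suc n) \<dots> (eval_upto K log1p_fps ?v + ?u')"
    using n by (intro eval_upto_log1p_add_agree_below[OF s u']) auto
  also have "agree_below (Suc n) \<dots> (ln_trunc K s + u)"
    unfolding ln_trunc_def
  proof (rule agree_below_add)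
    show "agree_below (Suc n) (eval_upto K log1p_fps ?v) (trunc K (eval_upto K log1p_fps ?v))"
      using agree_below_sym[OF trunc_agree_below] agree_below_mono n by blast
    show "agree_below (Suc n) ?u' u"
      using uv by (simp add: agree_below_def)
  qed
  finally show ?thesis .
qed

lemma ln_trunc_exp_trunc_mult_agree_below:
  assumes s: "vanishes_below 1 (s - 1)" and c: "vanishes_below n c" and n: "1 \<le> n" "n \<le> K"
  shows "agree_below (Suc n) (ln_trunc K (mult_trunc K (exp_trunc K c) s)) (ln_trunc K s + c)"
proof -
  let ?u = "eval_upto K expm1_fps c"
  have uc: "agree_below (Suc n) ?u c"
    using n by (intro eval_upto_expm1_agree_below c) auto
  have u: "vanishes_below n ?u"
    using agree_below_vanishes_below_iff[OF agree_below_mono[OF uc]] c by auto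
  have "agree_below (Suc K) (mult_trunc K (exp_trunc K c) s) ((1 + ?u) * s)"
    unfolding mult_trunc_def exp_trunc_def eval_upto_exp_fps[symmetric]
    by (intro agree_below_trans[OF trunc_agree_below] agree_below_mult trunc_agree_below agree_below_refl)
  then have "ln_trunc K (mult_trunc K (exp_trunc K c) s) = ln_trunc K ((1 + ?u) * s)"
    by (rule ln_trunc_cong)
  also have "agree_below (Suc n) \<dots> (ln_trunc K s + ?u)"
    by (rule ln_trunc_mult_agree_below[OF s u n])
  also have "agree_below (Suc n) \<dots> (ln_trunc K s + c)"
    by (intro agree_below_add agree_below_refl uc)
  finally show ?thesis .
qed

definition log_sum :: "nat \<Rightarrow> nat \<Rightarrow> (nat \<Rightarrow> ncpoly) \<Rightarrow> ncpoly \<Rightarrow> ncpoly" where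
  "log_sum K N xs m = (\<Sum>i<N. ln_trunc K (mult_trunc K (inverse_trunc K m) (xs i)))"

lemma log_sum_in_lie_polys:
  "\<forall>i<N. xs i \<in> group_polys d K \<Longrightarrow> m \<in> group_polys d K \<Longrightarrow> log_sum K N xs m \<in> lie_polys d K"
  unfolding log_sum_def
  by (intro lie_polys_sum ln_trunc_in_lie_polys mult_trunc_in_group_polys inverse_trunc_in_group_polys)
    auto

lemma log_sum_mult_exp_agree_below:
  assumes xs: "\<forall>i<N. xs i \<in> group_polys d K" and m: "m \<in> group_polys d K" and c: "c \<in> lie_polys d K"
    and cn: "vanishes_below n c" and n: "1 \<le> n" "n \<le> K"
  shows "agree_below (Suc n) (log_sum K N xs (mult_trunc K m (exp_trunc K c)))
    (log_sum K N xs m - scalar (real N) * c)"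
proof -
  have inv: "inverse_trunc K (mult_trunc K m (exp_trunc K c)) = mult_trunc K (exp_trunc K (- c)) (inverse_trunc K m)"
    using inverse_trunc_mult_trunc[OF m exp_trunc_in_group_polys[OF c]] inverse_trunc_exp_trunc[OF c]
    by simp
  have "agree_below (Suc n) (ln_trunc K (mult_trunc K (inverse_trunc K (mult_trunc K m (exp_trunc K c))) (xs i)))
      (ln_trunc K (mult_trunc K (inverse_trunc K m) (xs i)) + - c)"
    if i: "i < N" for i
  proof -
    have "mult_trunc K (inverse_trunc K m) (xs i) \<in> group_polys d K"
      using i xs by (intro mult_trunc_in_group_polys inverse_trunc_in_group_polys m) auto
    then show ?thesis
      unfolding inv mult_trunc_assoc
      by (intro ln_trunc_exp_trunc_mult_agree_below group_polys_vanishes_below vanishes_below_uminus cn n)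
  qed
  then have "agree_below (Suc n) (log_sum K N xs (mult_trunc K m (exp_trunc K c)))
      (\<Sum>i<N. ln_trunc K (mult_trunc K (inverse_trunc K m) (xs i)) + - c)"
    unfolding log_sum_def by (intro agree_below_sum) auto
  also have "(\<Sum>i<N. ln_trunc K (mult_trunc K (inverse_trunc K m) (xs i)) + - c)
      = log_sum K N xs m - scalar (real N) * c"
    by (simp add: log_sum_def sum_subtractf scalar_of_nat)
  finally show ?thesis .
qed

lemma lowest_nonvanishing_degree:
  assumes "trunc K c = c" "vanishes_below 1 c" "c \<noteq> 0"
  obtains n where "1 \<le> n" "n \<le> K" "vanishes_below n c" "\<not> vanishes_below (Suc n) c"
proof -
  obtain w0 where w0: "coeff c w0 \<noteq> 0"
    using assms(3) by (metis lookup_zero poly_mapping_eqI)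
  have w0K: "length w0 \<le> K"
    using w0 assms(1) by (metis coeff_trunc)
  let ?P = "\<lambda>n. \<not> vanishes_below (Suc n) c"
  have P0: "?P (length w0)" using w0 by (auto simp: vanishes_below_def deg_list)
  define n where "n = (LEAST n. ?P n)"
  have "?P n" "n \<le> length w0"
    unfolding n_def by (rule LeastI[of ?P, OF P0], rule Least_le[of ?P, OF P0])
  moreover have "vanishes_below n c"
    unfolding vanishes_below_def
  proof (intro allI impI)
    fix w :: "nat list" assume w: "deg w < n"
    show "coeff c w = 0"
    proof (rule ccontr)
      assume "coeff c w \<noteq> 0"
      then have "?P (length w)" by (auto simp: vanishes_below_def deg_list)
      then have "n \<le> length w" unfolding n_def by (rule Least_le)
      then show False using w by (simp add: deg_list)
    qed
  qed
  moreover have "n \<noteq> 0"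
    using \<open>?P n\<close> assms(2) by (metis One_nat_def)
  ultimately show ?thesis
    using that w0K by (metis One_nat_def Suc_leI le_trans neq0_conv)
qed

theorem log_sum_eq_0_unique:
  assumes N: "1 \<le> N" and xs: "\<forall>i<N. xs i \<in> group_polys d K"
    and m: "m \<in> group_polys d K" and m': "m' \<in> group_polys d K"
    and F: "log_sum K N xs m = 0" and F': "log_sum K N xs m' = 0"
  shows "m = m'"
proof (rule ccontr)
  assume ne: "m \<noteq> m'"
  let ?c = "ln_trunc K (mult_trunc K (inverse_trunc K m) m')"
  have g: "mult_trunc K (inverse_trunc K m) m' \<in> group_polys d K"
    by (intro mult_trunc_in_group_polys inverse_trunc_in_group_polys m m')
  have c: "?c \<in> lie_polys d K" by (rule ln_trunc_in_lie_polys[OF g])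
  have m'_eq: "m' = mult_trunc K m (exp_trunc K ?c)"
    by (simp flip: mult_trunc_assoc add: exp_trunc_ln_trunc[OF g] mult_trunc_inverse_trunc_right[OF m]
        mult_trunc_1_left group_polys_trunc[OF m'])
  have "?c \<noteq> 0"
    using ne m'_eq by (auto simp: exp_trunc_0 mult_trunc_1_right group_polys_trunc[OF m])
  then obtain n where n: "1 \<le> n" "n \<le> K" and cn: "vanishes_below n ?c" "\<not> vanishes_below (Suc n) ?c"
    using lowest_nonvanishing_degree lie_polys_trunc[OF c] lie_polys_vanishes_below[OF c] by metis
  have "agree_below (Suc n) 0 (0 - scalar (real N) * ?c)"
    using log_sum_mult_exp_agree_below[OF xs m c cn(1) n] F F' m'_eq by simp
  then have "vanishes_below (Suc n) (scalar (real N) * ?c)"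
    by (simp add: agree_below_def)
  then have "vanishes_below (Suc n) (scalar (1 / real N) * (scalar (real N) * ?c))"
    by (rule vanishes_below_scalar_mult)
  then show False
    using N cn(2) by (simp add: scalar_mult_assoc)
qed

theorem log_sum_eq_0_exists:
  assumes N: "1 \<le> N" and xs: "\<forall>i<N. xs i \<in> group_polys d K"
  shows "\<exists>m\<in>group_polys d K. log_sum K N xs m = 0"
proof -
  \<comment> \<open>correct m by the exponential of the mean residual, gaining one degree each time\<close>
  have "\<exists>m\<in>group_polys d K. vanishes_below (Suc j) (log_sum K N xs m)" if "j \<le> K" for j
    using that
  proof (induction j)
    case 0
    show ?case
      using lie_polys_vanishes_below[OF log_sum_in_lie_polys[OF xs one_in_group_polys]] one_in_group_polys
      by auto
  next
    case (Suc j)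
    then obtain m where m: "m \<in> group_polys d K" and lm: "vanishes_below (Suc j) (log_sum K N xs m)"
      by auto
    let ?c = "scalar (1 / real N) * log_sum K N xs m"
    have c: "?c \<in> lie_polys d K"
      by (rule lie_polys_scalar_mult[OF log_sum_in_lie_polys[OF xs m]])
    have "agree_below (Suc (Suc j)) (log_sum K N xs (mult_trunc K m (exp_trunc K ?c)))
        (log_sum K N xs m - scalar (real N) * ?c)"
      by (rule log_sum_mult_exp_agree_below[OF xs m c vanishes_below_scalar_mult[OF lm]]) (use Suc in auto)
    moreover have "scalar (real N) * ?c = log_sum K N xs m"
      using N by (simp add: scalar_mult_assoc)
    ultimately show ?case
      using mult_trunc_in_group_polys[OF m exp_trunc_in_group_polys[OF c]]
      by (auto simp: agree_below_def)
  qed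
  then obtain m where m: "m \<in> group_polys d K" and lm: "vanishes_below (Suc K) (log_sum K N xs m)"
    by blast
  have "log_sum K N xs m = trunc K (log_sum K N xs m)"
    using lie_polys_trunc[OF log_sum_in_lie_polys[OF xs m]] by simp
  also have "\<dots> = 0" by (rule trunc_eq_0_if_vanishes_below[OF lm])
  finally show ?thesis using m by blast
qed

section \<open>The barycentre\<close>

lemma log_sum_coeff:
  assumes "\<forall>i<N. x i = coeff (xs i)"
  shows "(\<lambda>w. \<Sum>i<N. tlog K (tmul K (tinv K (coeff m)) (x i)) w) = coeff (log_sum K N xs m)"
proof
  fix w
  have "(\<Sum>i<N. tlog K (tmul K (tinv K (coeff m)) (x i)) w)
      = (\<Sum>i<N. coeff (ln_trunc K (mult_trunc K (inverse_trunc K m) (xs i))) w)"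
    by (rule sum.cong) (simp_all add: assms tinv_coeff tmul_coeff tlog_coeff)
  then show "(\<Sum>i<N. tlog K (tmul K (tinv K (coeff m)) (x i)) w) = coeff (log_sum K N xs m) w"
    by (simp add: log_sum_def lookup_sum)
qed

lemma bary_eq_iff:
  assumes N: "1 \<le> N" and xs: "\<forall>i<N. xs i \<in> group_polys d K" and x: "\<forall>i<N. x i = coeff (xs i)"
    and m: "m \<in> group_polys d K"
  shows "bary d K N x = coeff m \<longleftrightarrow> log_sum K N xs m = 0"
proof -
  let ?Q = "\<lambda>m. m \<in> grp d K \<and> (\<lambda>w. \<Sum>i<N. tlog K (tmul K (tinv K m) (x i)) w) = (\<lambda>w. 0)"
  have Q_coeff: "?Q (coeff p) \<longleftrightarrow> log_sum K N xs p = 0" if "p \<in> group_polys d K" for p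
    using that
    by (auto simp: grp_eq_coeff_group_polys log_sum_coeff[OF x] zero_fun_eq_coeff)
  obtain m0 where m0: "m0 \<in> group_polys d K" "log_sum K N xs m0 = 0"
    using log_sum_eq_0_exists[OF N xs] by blast
  have ex1: "\<exists>!m. ?Q m"
  proof
    show "?Q (coeff m0)" using Q_coeff m0 by blast
  next
    fix m assume Qm: "?Q m"
    then obtain p where p: "p \<in> group_polys d K" "m = coeff p"
      by (auto simp: grp_eq_coeff_group_polys)
    then have "log_sum K N xs p = 0" using Q_coeff Qm by blast
    then show "m = coeff m0"
      using log_sum_eq_0_unique[OF N xs p(1) m0(1) _ m0(2)] p(2) by simp
  qed
  then have Q_bary: "?Q (bary d K N x)"
    unfolding bary_def by (rule theI')
  show ?thesis
  proof
    assume "bary d K N x = coeff m"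
    then show "log_sum K N xs m = 0" using Q_bary Q_coeff[OF m] by simp
  next
    assume "log_sum K N xs m = 0"
    then show "bary d K N x = coeff m" using Q_coeff[OF m] Q_bary ex1 by blast
  qed
qed

lemma ln_trunc_1: "ln_trunc K 1 = 0"
  by (simp add: ln_trunc_def eval_upto_at_0)

lemma bary_const:
  assumes N: "1 \<le> N" and y: "y \<in> grp d K"
  shows "bary d K N (\<lambda>_. y) = y"
proof -
  obtain p where p: "p \<in> group_polys d K" "y = coeff p"
    using y by (auto simp: grp_eq_coeff_group_polys)
  have "log_sum K N (\<lambda>_. p) p = 0"
    by (simp add: log_sum_def mult_trunc_inverse_trunc_left[OF p(1)] ln_trunc_1)
  then show ?thesis
    using bary_eq_iff[OF N, of "\<lambda>_. p" d K "\<lambda>_. y" p] p by simp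
qed

lemma bary_permute:
  assumes "\<sigma> permutes {..<N}"
  shows "bary d K N (x \<circ> \<sigma>) = bary d K N x"
proof -
  have "(\<Sum>i<N. tlog K (tmul K (tinv K m) ((x \<circ> \<sigma>) i)) w) = (\<Sum>i<N. tlog K (tmul K (tinv K m) (x i)) w)"
    for m w
    using sum.permute[OF assms, of "\<lambda>i. tlog K (tmul K (tinv K m) (x i)) w"] by (simp add: comp_def)
  then show ?thesis by (simp add: bary_def)
qed

lemma ln_trunc_translate_ex1:
  assumes y: "y \<in> group_polys d K" and a: "a \<in> lie_polys d K"
  shows "\<exists>!z. z \<in> group_polys d K \<and> ln_trunc K (mult_trunc K (inverse_trunc K y) z) = a"
proof
  let ?z = "mult_trunc K y (exp_trunc K a)"
  have e: "exp_trunc K a \<in> group_polys d K" by (rule exp_trunc_in_group_polys[OF a])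
  have "mult_trunc K (inverse_trunc K y) ?z = mult_trunc K (mult_trunc K (inverse_trunc K y) y) (exp_trunc K a)"
    by (simp only: mult_trunc_assoc)
  also have "\<dots> = exp_trunc K a"
    by (simp add: mult_trunc_inverse_trunc_left[OF y] mult_trunc_1_left group_polys_trunc[OF e])
  finally have "mult_trunc K (inverse_trunc K y) ?z = exp_trunc K a" .
  then show "?z \<in> group_polys d K \<and> ln_trunc K (mult_trunc K (inverse_trunc K y) ?z) = a"
    using mult_trunc_in_group_polys[OF y e] ln_trunc_exp_trunc[OF a] by simp
next
  fix z assume z: "z \<in> group_polys d K \<and> ln_trunc K (mult_trunc K (inverse_trunc K y) z) = a"
  have "mult_trunc K (inverse_trunc K y) z \<in> group_polys d K"
    using z by (intro mult_trunc_in_group_polys inverse_trunc_in_group_polys y) auto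
  then have yz: "mult_trunc K (inverse_trunc K y) z = exp_trunc K a"
    using exp_trunc_ln_trunc z by metis
  have "z = mult_trunc K (mult_trunc K y (inverse_trunc K y)) z"
    using z group_polys_trunc[of z d K] by (simp add: mult_trunc_inverse_trunc_right[OF y] mult_trunc_1_left)
  also have "\<dots> = mult_trunc K y (exp_trunc K a)"
    by (simp only: mult_trunc_assoc yz)
  finally show "z = mult_trunc K y (exp_trunc K a)" .
qed

lemma bary_update_last_eq_iff:
  assumes xs: "\<forall>i<M. xs i \<in> group_polys d K \<and> x i = coeff (xs i)"
    and y: "y \<in> group_polys d K" and z: "z \<in> group_polys d K"
  shows "bary d K (Suc M) (x(M := coeff z)) = coeff y
    \<longleftrightarrow> ln_trunc K (mult_trunc K (inverse_trunc K y) z)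
        = - (\<Sum>i<M. ln_trunc K (mult_trunc K (inverse_trunc K y) (xs i)))"
    (is "_ \<longleftrightarrow> ?L = - ?S")
proof -
  have "bary d K (Suc M) (x(M := coeff z)) = coeff y \<longleftrightarrow> log_sum K (Suc M) (xs(M := z)) y = 0"
    using xs z by (intro bary_eq_iff y) auto
  also have "log_sum K (Suc M) (xs(M := z)) y = ?S + ?L"
    by (simp add: log_sum_def)
  also have "\<dots> = 0 \<longleftrightarrow> ?L = - ?S"
    by (simp only: eq_neg_iff_add_eq_0 add.commute)
  finally show ?thesis .
qed

lemma bary_update_last_ex1:
  assumes N: "1 \<le> N" and x: "\<forall>i<N - 1. x i \<in> grp d K" and y: "y \<in> grp d K"
  shows "\<exists>!z. z \<in> grp d K \<and> bary d K N (x(N - 1 := z)) = y"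
proof -
  obtain M where NM: "N = Suc M" using N by (cases N) auto
  obtain yp where yp: "yp \<in> group_polys d K" "y = coeff yp"
    using y by (auto simp: grp_eq_coeff_group_polys)
  have "\<forall>i<M. \<exists>p. p \<in> group_polys d K \<and> x i = coeff p"
    using x NM by (auto simp: grp_eq_coeff_group_polys)
  then obtain xs where xs: "\<forall>i<M. xs i \<in> group_polys d K \<and> x i = coeff (xs i)"
    by metis
  let ?S = "\<Sum>i<M. ln_trunc K (mult_trunc K (inverse_trunc K yp) (xs i))"
  have "- ?S \<in> lie_polys d K"
    using xs by (intro lie_polys_uminus lie_polys_sum ln_trunc_in_lie_polys mult_trunc_in_group_polys
        inverse_trunc_in_group_polys yp) auto
  then have "\<exists>!z. z \<in> group_polys d K \<and> ln_trunc K (mult_trunc K (inverse_trunc K yp) z) = - ?S"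
    by (rule ln_trunc_translate_ex1[OF yp(1)])
  then obtain zp where zp: "zp \<in> group_polys d K \<and> ln_trunc K (mult_trunc K (inverse_trunc K yp) zp) = - ?S"
    and zp_unique: "\<forall>z. z \<in> group_polys d K \<and> ln_trunc K (mult_trunc K (inverse_trunc K yp) z) = - ?S
      \<longrightarrow> z = zp"
    by (rule ex1E)
  show ?thesis
  proof
    show "coeff zp \<in> grp d K \<and> bary d K N (x(N - 1 := coeff zp)) = y"
      using zp bary_update_last_eq_iff[OF xs yp(1)] by (auto simp: grp_eq_coeff_group_polys NM yp(2))
  next
    fix z assume z: "z \<in> grp d K \<and> bary d K N (x(N - 1 := z)) = y"
    then obtain p where p: "p \<in> group_polys d K" "z = coeff p"
      by (auto simp: grp_eq_coeff_group_polys)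
    then show "z = coeff zp"
      using z zp_unique bary_update_last_eq_iff[OF xs yp(1) p(1)] by (simp add: NM yp(2))
  qed
qed

theorem proposition4p8:
  fixes d k N :: nat
  assumes "1 \<le> N"
  shows "(\<forall>y\<in>grp d k. \<exists>x. (\<forall>i<N. x i \<in> grp d k) \<and> bary d k N x = y)
    \<and> (\<forall>x \<sigma>. (\<forall>i<N. x i \<in> grp d k) \<and> \<sigma> permutes {..<N}
          \<longrightarrow> bary d k N (x \<circ> \<sigma>) = bary d k N x)
    \<and> (\<forall>x. \<forall>y\<in>grp d k. (\<forall>i<N - 1. x i \<in> grp d k)
          \<longrightarrow> (\<exists>!z. z \<in> grp d k \<and> bary d k N (x(N - 1 := z)) = y))"
proof (intro conjI ballI allI impI)
  fix y assume "y \<in> grp d k"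
  then show "\<exists>x. (\<forall>i<N. x i \<in> grp d k) \<and> bary d k N x = y"
    using bary_const[OF assms] by (intro exI[of _ "\<lambda>_. y"]) auto
next
  fix x :: "nat \<Rightarrow> tensor" and \<sigma>
  assume "(\<forall>i<N. x i \<in> grp d k) \<and> \<sigma> permutes {..<N}"
  then show "bary d k N (x \<circ> \<sigma>) = bary d k N x"
    using bary_permute by blast
next
  fix x y assume "y \<in> grp d k" "\<forall>i<N - 1. x i \<in> grp d k"
  then show "\<exists>!z. z \<in> grp d k \<and> bary d k N (x(N - 1 := z)) = y"
    using bary_update_last_ex1[OF assms] by blast
qed

end
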